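(* Let $a<b$ be real numbers, let $K\ge 2$, $\mathcal{I}=\{1,\dots,K\}$, and let $D_{cdf}([a,b])$ be the set of cdfs $F$ on $\mathbb{R}$ with $F(a-)=0$ and $F(b)=1$. Let $\mathscr{D}\subseteq D_{cdf}([a,b])$ be nonempty and convex. Let $\mathsf{T}:D_{cdf}([a,b])\to\mathbb{R}$ satisfy, for some $C>0$, $|\mathsf{T}(F)-\mathsf{T}(G)|\le C\|F-G\|_\infty$ for all $F\in\mathscr{D}$, $G\in D_{cdf}([a,b])$. Suppose $\mathscr{D}$ contains $H_1,H_2$ such that $J_\tau:=\tau H_1+(1-\tau)H_2\in\mathscr{D}$ for all $\tau\in[0,1]$ and, for some $c_->0$, $\mathsf{T}(J_{\tau_2})-\mathsf{T}(J_{\tau_1})\ge c_-(\tau_2-\tau_1)$ for all $0\le\tau_1\le\tau_2\le 1$. Let $\mathscr{M}_K$ be a closed subset of the simplex $\mathscr{S}_K$ with at least two elements. Then there exists a constant $c>0$, independent of $K$, $n$ and $\mathscr{M}_K$, such that for every policy $\pi$ with recommendations in $\mathscr{M}_K$ and every randomization measure $\mathbb{P}_G$, $$\sup_{F^1,\dots,F^K\in\{J_\tau:\tau\in[0,1]\}}\mathbb{E}[r_n(\pi,\mathscr{M}_K)]\ge c\,\mathrm{diam}^2(\mathscr{M}_K)/\sqrt{n}\quad\text{for every } n\ge K,$$ where the supremum is over all potential outcome distributions with independent marginals having cdfs $F^1,\dots,F^K$ in $\{J_\tau:\tau\in[0,1]\}$, and $\mathrm{diam}(\mathscr{M}_K)=\max\{\|\nu-\gamma\|:\nu,\gamma\in\mathscr{M}_K\}$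 (Euclidean norm).
   Context: $\|F-G\|_\infty=\sup_x|F(x)-G(x)|$. $\mathscr{S}_K=\{\delta\in[0,1]^K:\sum_i\delta_i=1\}$. For $\delta\in\mathscr{S}_K$ and $\mathbf{F}=(F^1,\dots,F^K)$, $\langle\delta,\mathbf{F}\rangle=\sum_i\delta_iF^i$. Setting: potential outcome vectors $Y_t=(Y_{1,t},\dots,Y_{K,t})$, $t\in\mathbb{N}$, are i.i.d., with $Y_{i,t}$ having cdf $F^i$; randomization variables $G_t$, $t\in\mathbb{N}$, are i.i.d. with distribution $\mathbb{P}_G$ (the randomization measure) and independent of $(Y_t)$. A policy $\pi$ with recommendations in $\mathscr{M}_K$ is a triangular array of measurable maps: for each $n\ge K$, $\pi_{n,t}:([a,b]\times\mathbb{R})^{t-1}\times\mathbb{R}\to\mathcal{I}$ for $t=1,\dots,n$ and $\pi_{n,n+1}:([a,b]\times\mathbb{R})^n\times\mathbb{R}\to\mathscr{M}_K$. Inputs are defined recursively: $(Z_0,G_1)=(G_1)$ and $Z_{t-1}=(Y_{\pi_{n,t-1}(Z_{t-2},G_{t-1}),t-1},G_{t-1},\dots,Y_{\pi_{n,1}(G_1),1},G_1)$; subject $t$ is assigned to treatment $\pi_{n,t}(Z_{t-1},G_t)$ and the final recommendation is $\pi_{n,n+1}(Z_n,G_{n+1})$. The regret is $r_n(\pi,\mathscr{M}_K)=\max_{\delta\in\mathscr{M}_K}\mathsf{T}(\langle\delta,\mathbf{F}\rangle)-\mathsf{T}(\langle\pi_{n,n+1}(Z_n,G_{n+1}),\mathbf{F}\rangle)$.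 *)

theory Defs
  imports "HOL-Probability.Probability"
begin

definition is_cdf :: "(real \<Rightarrow> real) \<Rightarrow> bool" where
  "is_cdf F \<longleftrightarrow> mono F \<and> (\<forall>x. continuous (at_right x) F)
     \<and> (F \<longlongrightarrow> 0) at_bot \<and> (F \<longlongrightarrow> 1) at_top"

definition Dcdf :: "real \<Rightarrow> real \<Rightarrow> (real \<Rightarrow> real) set" where
  "Dcdf a b = {F. is_cdf F \<and> (F \<longlongrightarrow> 0) (at_left a) \<and> F b = 1}"

definition supdist :: "(real \<Rightarrow> real) \<Rightarrow> (real \<Rightarrow> real) \<Rightarrow> real" where
  "supdist F G = (SUP x. \<bar>F x - G x\<bar>)"

definition convex_fset :: "(real \<Rightarrow> real) set \<Rightarrow> bool" where
  "convex_fset D \<longleftrightarrow> (\<forall>F\<in>D. \<forall>G\<in>D. \<forall>u\<in>{0..1::real}. (\<lambda>x. u * F x + (1 - u) * G x) \<in> D)"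

text \<open>Treatments are indexed by {1..K}; weight vectors are extensional functions on {1..K}.\<close>
definition simplexK :: "nat \<Rightarrow> (nat \<Rightarrow> real) set" where
  "simplexK K = {\<delta> \<in> PiE {1..K} (\<lambda>_. {0..1}). (\<Sum>i=1..K. \<delta> i) = 1}"

definition mix :: "nat \<Rightarrow> (nat \<Rightarrow> real) \<Rightarrow> (nat \<Rightarrow> real \<Rightarrow> real) \<Rightarrow> (real \<Rightarrow> real)" where
  "mix K \<delta> F = (\<lambda>x. \<Sum>i=1..K. \<delta> i * F i x)"

definition diamK :: "nat \<Rightarrow> (nat \<Rightarrow> real) set \<Rightarrow> real" where
  "diamK K M = (SUP p \<in> M \<times> M. L2_set (\<lambda>i. fst p i - snd p i) {1..K})"

text \<open>Measurable space of histories ((Y_s, G_s))_{s=1..m} in ([a,b] x R)^m.\<close>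
definition Hspace :: "real \<Rightarrow> real \<Rightarrow> nat \<Rightarrow> (nat \<Rightarrow> real \<times> real) measure" where
  "Hspace a b m = PiM {1..m} (\<lambda>_. restrict_space borel {a..b} \<Otimes>\<^sub>M (borel :: real measure))"

text \<open>A policy: assignment maps pol n t (t = 1..n) into {1..K} and recommendation
  maps recm n into M, all measurable, for every n \<ge> K.\<close>
definition is_policy :: "nat \<Rightarrow> real \<Rightarrow> real \<Rightarrow> (nat \<Rightarrow> real) set
    \<Rightarrow> (nat \<Rightarrow> nat \<Rightarrow> (nat \<Rightarrow> real \<times> real) \<Rightarrow> real \<Rightarrow> nat)
    \<Rightarrow> (nat \<Rightarrow> (nat \<Rightarrow> real \<times> real) \<Rightarrow> real \<Rightarrow> (nat \<Rightarrow> real)) \<Rightarrow> bool" where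
  "is_policy K a b M pol recm \<longleftrightarrow>
     (\<forall>n\<ge>K. (\<forall>t\<in>{1..n}. (\<lambda>(h, g). pol n t h g)
                 \<in> measurable (Hspace a b (t - 1) \<Otimes>\<^sub>M borel) (count_space {1..K}))
          \<and> (\<lambda>(h, g). recm n h g)
                 \<in> measurable (Hspace a b n \<Otimes>\<^sub>M borel) (restrict_space (PiM {1..K} (\<lambda>_. borel)) M))"

text \<open>History Z_t after t subjects: Z_t s = (Y_{assigned arm, s}, G_s) for s = 1..t.
  y (s,i) is the potential outcome of subject s under treatment i, g s = G_s.\<close>
primrec hist :: "(nat \<Rightarrow> nat \<Rightarrow> (nat \<Rightarrow> real \<times> real) \<Rightarrow> real \<Rightarrow> nat) \<Rightarrow> nat
    \<Rightarrow> (nat \<times> nat \<Rightarrow> real) \<Rightarrow> (nat \<Rightarrow> real) \<Rightarrow> nat \<Rightarrow> (nat \<Rightarrow> real \<times> real)" where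
  "hist pol n y g 0 = (\<lambda>_. undefined)"
| "hist pol n y g (Suc t) = (hist pol n y g t)(Suc t :=
      (y (Suc t, pol n (Suc t) (hist pol n y g t) (g (Suc t))), g (Suc t)))"

definition regret :: "((real \<Rightarrow> real) \<Rightarrow> real) \<Rightarrow> nat \<Rightarrow> (nat \<Rightarrow> real) set
    \<Rightarrow> (nat \<Rightarrow> nat \<Rightarrow> (nat \<Rightarrow> real \<times> real) \<Rightarrow> real \<Rightarrow> nat)
    \<Rightarrow> (nat \<Rightarrow> (nat \<Rightarrow> real \<times> real) \<Rightarrow> real \<Rightarrow> (nat \<Rightarrow> real))
    \<Rightarrow> (nat \<Rightarrow> real \<Rightarrow> real) \<Rightarrow> nat \<Rightarrow> (nat \<times> nat \<Rightarrow> real) \<Rightarrow> (nat \<Rightarrow> real) \<Rightarrow> real" where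
  "regret T K M pol recm F n y g =
     (SUP \<delta>\<in>M. T (mix K \<delta> F)) - T (mix K (recm n (hist pol n y g n) (g (Suc n))) F)"

text \<open>Canonical probability space: independent outcomes Y_{i,t} ~ F^i (t = 1..n, i = 1..K)
  and independent G_t ~ P_G (t = 1..n+1).\<close>
definition outcome_space :: "real \<Rightarrow> real \<Rightarrow> nat \<Rightarrow> nat \<Rightarrow> (nat \<Rightarrow> real \<Rightarrow> real)
    \<Rightarrow> (nat \<times> nat \<Rightarrow> real) measure" where
  "outcome_space a b K n F =
     PiM ({1..n} \<times> {1..K}) (\<lambda>(t, i). restrict_space (interval_measure (F i)) {a..b})"

definition sample_space :: "real \<Rightarrow> real \<Rightarrow> nat \<Rightarrow> nat \<Rightarrow> (nat \<Rightarrow> real \<Rightarrow> real) \<Rightarrow> real measure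
    \<Rightarrow> ((nat \<times> nat \<Rightarrow> real) \<times> (nat \<Rightarrow> real)) measure" where
  "sample_space a b K n F PG = outcome_space a b K n F \<Otimes>\<^sub>M PiM {1..Suc n} (\<lambda>_. PG)"

definition expected_regret where
  "expected_regret a b T K M pol recm F PG n =
     (\<integral>\<omega>. regret T K M pol recm F n (fst \<omega>) (snd \<omega>) \<partial>sample_space a b K n F PG)"

end

theory Submission
  imports Defs
begin

text \<open>
  Fix recommendations \<nu>, \<gamma> \<in> M and a coordinate j maximising \<bar>\<nu> i - \<gamma> i\<bar>, say with
  \<gamma> j \<le> \<nu> j; as both vectors lie in the simplex, \<parallel>\<nu> - \<gamma>\<parallel>^2 \<le> 2 (\<nu> j - \<gamma> j).
  Consider the two problems in which arm j has outcome cdf J(1/2 \<plusminus> \<epsilon>) and every other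
  arm J(1/2), with \<epsilon> = 1/sqrt(96 n). Mixing these cdfs with weights \<delta> gives
  J(1/2 \<plusminus> \<epsilon> \<delta> j), and T \<circ> J grows at rate at least c_minus, so recommending \<delta> costs at
  least c_minus \<epsilon> (\<nu> j - \<delta> j) in the first problem and at least c_minus \<epsilon> (\<delta> j - \<gamma> j) in
  the second: whatever the recommendation, the two costs add up to at least
  c_minus \<epsilon> (\<nu> j - \<gamma> j). By Le Cam's two-point argument the larger of the two expected
  regrets is at least a quarter of this, provided that expectations of functions bounded by B
  under the two sample distributions differ by at most B/2.

  This closeness does not involve the policy: it holds for the joint law of the whole table of
  potential outcomes and randomisation variables. Writing J(q) = q H1 + (1 - q) H2, the product
  of the n K outcome laws is a mixture, over the set S of cells that draw from H1, of pure
  products of H1 and H2, weighted by the Bernoulli product probability of S. Hence the two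
  expectations differ by at most B times the l1-distance of the two weight vectors, which
  Cauchy-Schwarz bounds by sqrt(2 ((1 + 4\<epsilon>^2)^n - (1 - 4\<epsilon>^2)^n)) \<le> 1/2.
\<close>

lemma (in prob_space) integrable_bounded:
  fixes f :: "'a \<Rightarrow> real"
  assumes "f \<in> borel_measurable M" "\<And>x. x \<in> space M \<Longrightarrow> \<bar>f x\<bar> \<le> B"
  shows "integrable M f"
  using assms by (intro integrable_const_bound[where B=B]) auto

lemma (in prob_space) abs_integral_le_bound:
  fixes f :: "'a \<Rightarrow> real"
  assumes "f \<in> borel_measurable M" "\<And>x. x \<in> space M \<Longrightarrow> \<bar>f x\<bar> \<le> B"
  shows "\<bar>integral\<^sup>L M f\<bar> \<le> B"
proof -
  have "\<bar>integral\<^sup>L M f\<bar> \<le> (\<integral>x. \<bar>f x\<bar> \<partial>M)"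
    using integral_norm_bound[of M f] by simp
  also have "\<dots> \<le> B"
    using assms integrable_bounded[OF assms] by (intro integral_le_const) (auto intro!: AE_I2)
  finally show ?thesis .
qed

lemma PiM_sets_const:
  assumes "\<And>k. sets (M k) = sets X"
  shows "PiM I M \<rightarrow>\<^sub>M L = PiM I (\<lambda>_. X) \<rightarrow>\<^sub>M L" "space (PiM I M) = space (PiM I (\<lambda>_. X))"
proof -
  have "sets (PiM I M) = sets (PiM I (\<lambda>_. X))" by (rule sets_PiM_cong) (simp_all add: assms)
  then show "PiM I M \<rightarrow>\<^sub>M L = PiM I (\<lambda>_. X) \<rightarrow>\<^sub>M L" "space (PiM I M) = space (PiM I (\<lambda>_. X))"
    by (rule measurable_cong_sets[OF _ refl], rule sets_eq_imp_space_eq)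
qed

lemma integral_update_measurable_bounded:
  fixes g :: "('i \<Rightarrow> 'a) \<Rightarrow> real"
  assumes i: "i \<notin> I" and N: "\<And>k. sets (N k) = sets X" and P: "prob_space P" "sets P = sets X"
    and g: "g \<in> borel_measurable (PiM (insert i I) (\<lambda>_. X))"
      "\<And>x. x \<in> space (PiM (insert i I) (\<lambda>_. X)) \<Longrightarrow> \<bar>g x\<bar> \<le> B"
  shows "(\<lambda>x. \<integral>y. g (x(i := y)) \<partial>P) \<in> borel_measurable (PiM I N)"
    and "\<And>x. x \<in> space (PiM I N) \<Longrightarrow> \<bar>\<integral>y. g (x(i := y)) \<partial>P\<bar> \<le> B"
    and "\<And>x. x \<in> space (PiM I N) \<Longrightarrow> (\<lambda>y. g (x(i := y))) \<in> borel_measurable X"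
    and "\<And>x y. x \<in> space (PiM I N) \<Longrightarrow> y \<in> space X \<Longrightarrow> \<bar>g (x(i := y))\<bar> \<le> B"
proof -
  interpret P: prob_space P by (fact P)
  note space_N = PiM_sets_const(2)[OF N]
  have g_upd: "(\<lambda>(x, y). g (x(i := y))) \<in> borel_measurable (PiM I (\<lambda>_. X) \<Otimes>\<^sub>M X)"
    using measurable_comp[OF measurable_add_dim[where i=i and I=I and M="\<lambda>_. X"] g(1)]
    by (simp add: comp_def case_prod_beta')
  have "sets (PiM I (\<lambda>_. X) \<Otimes>\<^sub>M P) = sets (PiM I (\<lambda>_. X) \<Otimes>\<^sub>M X)"
    by (intro sets_pair_measure_cong) (simp_all add: P)
  then have "(\<lambda>(x, y). g (x(i := y))) \<in> borel_measurable (PiM I (\<lambda>_. X) \<Otimes>\<^sub>M P)"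
    by (subst measurable_cong_sets[of _ "PiM I (\<lambda>_. X) \<Otimes>\<^sub>M X" borel borel]) (simp_all add: g_upd)
  then show "(\<lambda>x. \<integral>y. g (x(i := y)) \<partial>P) \<in> borel_measurable (PiM I N)"
    unfolding PiM_sets_const(1)[OF N] by (rule P.borel_measurable_lebesgue_integral)
  show m: "(\<lambda>y. g (x(i := y))) \<in> borel_measurable X" if "x \<in> space (PiM I N)" for x
    using measurable_Pair2[OF g_upd] that by (simp add: space_N)
  show b: "\<bar>g (x(i := y))\<bar> \<le> B" if "x \<in> space (PiM I N)" "y \<in> space X" for x y
    using that i by (intro g(2)) (auto simp: space_N space_PiM PiE_def)
  have "space P = space X" using P(2) by (rule sets_eq_imp_space_eq)
  then show "\<bar>\<integral>y. g (x(i := y)) \<partial>P\<bar> \<le> B" if "x \<in> space (PiM I N)" for x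
    using m[OF that] b[OF that]
    by (intro P.abs_integral_le_bound) (simp_all add: measurable_cong_sets[OF P(2) refl])
qed

section \<open>Products of two-point mixtures\<close>

lemma integral_PiM_mixture_coordinate:
  fixes g :: "('i \<Rightarrow> 'a) \<Rightarrow> real"
  assumes A: "finite A" "i \<in> A"
    and N: "\<And>k. prob_space (N k)" "\<And>k. sets (N k) = sets X"
    and N0: "prob_space N0" "sets N0 = sets X" and N1: "prob_space N1" "sets N1 = sets X"
    and mixture: "\<And>f B. f \<in> borel_measurable X \<Longrightarrow> (\<And>y. y \<in> space X \<Longrightarrow> \<bar>f y\<bar> \<le> B) \<Longrightarrow>
        (\<integral>y. f y \<partial>N i) = q * (\<integral>y. f y \<partial>N1) + (1 - q) * (\<integral>y. f y \<partial>N0)"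
    and g: "g \<in> borel_measurable (PiM A (\<lambda>_. X))" "\<And>x. x \<in> space (PiM A (\<lambda>_. X)) \<Longrightarrow> \<bar>g x\<bar> \<le> B"
  shows "(\<integral>x. g x \<partial>PiM A N)
       = q * (\<integral>x. g x \<partial>PiM A (N(i := N1))) + (1 - q) * (\<integral>x. g x \<partial>PiM A (N(i := N0)))"
proof -
  define A' where "A' = A - {i}"
  have A': "A = insert i A'" "i \<notin> A'" "finite A'" using A by (auto simp: A'_def)
  define sec where "sec P x = (\<integral>y. g (x(i := y)) \<partial>P)" for P x
  have g': "g \<in> borel_measurable (PiM (insert i A') (\<lambda>_. X))"
    "\<And>x. x \<in> space (PiM (insert i A') (\<lambda>_. X)) \<Longrightarrow> \<bar>g x\<bar> \<le> B"
    using g A'(1) by simp_all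
  have sec: "sec P \<in> borel_measurable (PiM A' N)"
    "\<And>x. x \<in> space (PiM A' N) \<Longrightarrow> \<bar>sec P x\<bar> \<le> B"
    "\<And>x. x \<in> space (PiM A' N) \<Longrightarrow> (\<lambda>y. g (x(i := y))) \<in> borel_measurable X"
    "\<And>x y. x \<in> space (PiM A' N) \<Longrightarrow> y \<in> space X \<Longrightarrow> \<bar>g (x(i := y))\<bar> \<le> B"
    if "prob_space P" "sets P = sets X" for P
    unfolding sec_def using integral_update_measurable_bounded[OF A'(2) N(2) that g'] by simp_all
  have fubini: "(\<integral>x. g x \<partial>PiM A (N(i := P))) = (\<integral>x. sec P x \<partial>PiM A' N)"
    if P: "prob_space P" "sets P = sets X" for P
  proof -
    have NP: "sets ((N(i := P)) k) = sets X" for k by (simp add: P N)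
    interpret product_sigma_finite "N(i := P)"
      using prob_space_imp_sigma_finite[OF P(1)] prob_space_imp_sigma_finite[OF N(1)]
      by (simp add: product_sigma_finite_def)
    interpret prob_space "PiM A (N(i := P))" by (rule prob_space_PiM) (simp add: P N)
    have "integrable (PiM A (N(i := P))) g"
      using g by (intro integrable_bounded) (simp_all add: PiM_sets_const[OF NP])
    moreover have "PiM A' (N(i := P)) = PiM A' N"
      using A'(2) by (intro PiM_cong) auto
    ultimately show ?thesis
      using product_integral_insert[OF A'(3,2)] A'(1) by (simp add: sec_def)
  qed
  interpret PA': prob_space "PiM A' N" by (rule prob_space_PiM) (simp add: N)
  have "(\<integral>x. g x \<partial>PiM A N) = (\<integral>x. sec (N i) x \<partial>PiM A' N)"
    using fubini[OF N(1,2)[of i]] by simp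
  also have "\<dots> = (\<integral>x. q * sec N1 x + (1 - q) * sec N0 x \<partial>PiM A' N)"
  proof (intro Bochner_Integration.integral_cong refl)
    fix x assume x: "x \<in> space (PiM A' N)"
    show "sec (N i) x = q * sec N1 x + (1 - q) * sec N0 x"
      unfolding sec_def by (rule mixture[OF sec(3,4)[OF N0 x]])
  qed
  also have "\<dots> = q * (\<integral>x. sec N1 x \<partial>PiM A' N) + (1 - q) * (\<integral>x. sec N0 x \<partial>PiM A' N)"
    using PA'.integrable_bounded[OF sec(1,2)[OF N1]] PA'.integrable_bounded[OF sec(1,2)[OF N0]]
    by simp
  finally show ?thesis
    using fubini[OF N1] fubini[OF N0] by simp
qed

definition bernoulli_weight :: "('i \<Rightarrow> real) \<Rightarrow> 'i set \<Rightarrow> 'i set \<Rightarrow> real" where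
  "bernoulli_weight q I S = (\<Prod>k\<in>S. q k) * (\<Prod>k\<in>I - S. 1 - q k)"

lemma sum_Pow_insert_bernoulli_weight:
  assumes I: "finite I" "i \<notin> I"
  shows "(\<Sum>S\<in>Pow (insert i I). bernoulli_weight q (insert i I) S * G S)
       = (\<Sum>S\<in>Pow I. bernoulli_weight q I S * (q i * G (insert i S) + (1 - q i) * G S))"
proof -
  have with_i: "bernoulli_weight q (insert i I) (insert i S) = q i * bernoulli_weight q I S"
    and without_i: "bernoulli_weight q (insert i I) S = (1 - q i) * bernoulli_weight q I S"
    if "S \<subseteq> I" for S
  proof -
    have "finite S" "i \<notin> S" using that I finite_subset by auto
    moreover have "insert i I - insert i S = I - S" "insert i I - S = insert i (I - S)"
      using that I by auto
    ultimately show "bernoulli_weight q (insert i I) (insert i S) = q i * bernoulli_weight q I S"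
      "bernoulli_weight q (insert i I) S = (1 - q i) * bernoulli_weight q I S"
      using I by (simp_all add: bernoulli_weight_def)
  qed
  have "inj_on (insert i) (Pow I)"
    using I(2) by (intro inj_onI) (metis PowD insert_ident subsetD)
  moreover have "Pow I \<inter> insert i ` Pow I = {}" using I(2) by auto
  ultimately have "(\<Sum>S\<in>Pow (insert i I). bernoulli_weight q (insert i I) S * G S)
      = (\<Sum>S\<in>Pow I. bernoulli_weight q (insert i I) S * G S)
        + (\<Sum>S\<in>Pow I. bernoulli_weight q (insert i I) (insert i S) * G (insert i S))"
    using I(1) by (simp add: Pow_insert sum.union_disjoint sum.reindex)
  then show ?thesis
    by (simp add: with_i without_i distrib_left sum.distrib mult_ac add.commute)
qed

lemma integral_PiM_mixture:
  fixes g :: "('i \<Rightarrow> 'a) \<Rightarrow> real"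
  assumes I: "finite I"
    and N: "\<And>k. prob_space (N k)" "\<And>k. sets (N k) = sets X"
    and N0: "prob_space N0" "sets N0 = sets X" and N1: "prob_space N1" "sets N1 = sets X"
    and mixture: "\<And>k f B. k \<in> I \<Longrightarrow> f \<in> borel_measurable X \<Longrightarrow>
        (\<And>y. y \<in> space X \<Longrightarrow> \<bar>f y\<bar> \<le> B) \<Longrightarrow>
        (\<integral>y. f y \<partial>N k) = q k * (\<integral>y. f y \<partial>N1) + (1 - q k) * (\<integral>y. f y \<partial>N0)"
    and g: "g \<in> borel_measurable (PiM I (\<lambda>_. X))" "\<And>x. x \<in> space (PiM I (\<lambda>_. X)) \<Longrightarrow> \<bar>g x\<bar> \<le> B"
  shows "(\<integral>x. g x \<partial>PiM I N)
       = (\<Sum>S\<in>Pow I. bernoulli_weight q I S * (\<integral>x. g x \<partial>PiM I (\<lambda>k. if k \<in> S then N1 else N0)))"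
proof -
  define pure where "pure J S k = (if k \<in> S then N1 else if k \<in> J then N0 else N k)" for J S k
  have pure: "prob_space (pure J S k)" "sets (pure J S k) = sets X" for J S k
    using N N0 N1 by (simp_all add: pure_def)
  have expand: "(\<integral>x. g x \<partial>PiM I N)
      = (\<Sum>S\<in>Pow J. bernoulli_weight q J S * (\<integral>x. g x \<partial>PiM I (pure J S)))" if "J \<subseteq> I" for J
    using finite_subset[OF that I] that
  proof (induction J rule: finite_induct)
    case empty
    have "pure {} {} = N" by (simp add: pure_def fun_eq_iff)
    then show ?case by (simp add: bernoulli_weight_def)
  next
    case (insert i J)
    have split_i: "(\<integral>x. g x \<partial>PiM I (pure J S))
        = q i * (\<integral>x. g x \<partial>PiM I (pure (insert i J) (insert i S)))
          + (1 - q i) * (\<integral>x. g x \<partial>PiM I (pure (insert i J) S))" if "S \<subseteq> J" for S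
    proof -
      have upd: "(pure J S)(i := N1) = pure (insert i J) (insert i S)"
        "(pure J S)(i := N0) = pure (insert i J) S"
        using that insert(2) by (auto simp: pure_def fun_eq_iff)
      have i: "i \<in> I" "pure J S i = N i"
        using that insert(2,4) by (auto simp: pure_def)
      have mix_i: "(\<integral>y. f y \<partial>pure J S i) = q i * (\<integral>y. f y \<partial>N1) + (1 - q i) * (\<integral>y. f y \<partial>N0)"
        if "f \<in> borel_measurable X" "\<And>y. y \<in> space X \<Longrightarrow> \<bar>f y\<bar> \<le> B'" for f B'
        unfolding i(2) by (rule mixture[OF i(1) that])
      from integral_PiM_mixture_coordinate[where N="pure J S", OF I i(1) pure N0 N1 mix_i g]
      show ?thesis unfolding upd .
    qed
    show ?case
      using insert(3,4) by (simp add: sum_Pow_insert_bernoulli_weight[OF insert(1,2)] split_i)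
  qed
  have "PiM I (pure I S) = PiM I (\<lambda>k. if k \<in> S then N1 else N0)" for S
    by (intro PiM_cong) (auto simp: pure_def)
  then show ?thesis
    using expand[OF order_refl] by simp
qed

lemma abs_integral_PiM_mixture_diff_le:
  fixes g :: "('i \<Rightarrow> 'a) \<Rightarrow> real"
  assumes I: "finite I"
    and N: "\<And>k. prob_space (N k)" "\<And>k. sets (N k) = sets X"
    and N': "\<And>k. prob_space (N' k)" "\<And>k. sets (N' k) = sets X"
    and N0: "prob_space N0" "sets N0 = sets X" and N1: "prob_space N1" "sets N1 = sets X"
    and mixture: "\<And>k f B. k \<in> I \<Longrightarrow> f \<in> borel_measurable X \<Longrightarrow>
        (\<And>y. y \<in> space X \<Longrightarrow> \<bar>f y\<bar> \<le> B) \<Longrightarrow>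
        (\<integral>y. f y \<partial>N k) = q k * (\<integral>y. f y \<partial>N1) + (1 - q k) * (\<integral>y. f y \<partial>N0)"
    and mixture': "\<And>k f B. k \<in> I \<Longrightarrow> f \<in> borel_measurable X \<Longrightarrow>
        (\<And>y. y \<in> space X \<Longrightarrow> \<bar>f y\<bar> \<le> B) \<Longrightarrow>
        (\<integral>y. f y \<partial>N' k) = r k * (\<integral>y. f y \<partial>N1) + (1 - r k) * (\<integral>y. f y \<partial>N0)"
    and g: "g \<in> borel_measurable (PiM I (\<lambda>_. X))" "\<And>x. x \<in> space (PiM I (\<lambda>_. X)) \<Longrightarrow> \<bar>g x\<bar> \<le> B"
  shows "\<bar>(\<integral>x. g x \<partial>PiM I N) - (\<integral>x. g x \<partial>PiM I N')\<bar>
       \<le> B * (\<Sum>S\<in>Pow I. \<bar>bernoulli_weight q I S - bernoulli_weight r I S\<bar>)"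
proof -
  define G where "G S = (\<integral>x. g x \<partial>PiM I (\<lambda>k. if k \<in> S then N1 else N0))" for S
  have G: "\<bar>G S\<bar> \<le> B" for S
  proof -
    have sets: "sets (if k \<in> S then N1 else N0) = sets X" for k
      using N0 N1 by simp
    interpret prob_space "PiM I (\<lambda>k. if k \<in> S then N1 else N0)"
      using N0 N1 by (intro prob_space_PiM) simp
    show ?thesis
      unfolding G_def using g by (intro abs_integral_le_bound) (simp_all add: PiM_sets_const[OF sets])
  qed
  have "(\<integral>x. g x \<partial>PiM I N) = (\<Sum>S\<in>Pow I. bernoulli_weight q I S * G S)"
    unfolding G_def by (rule integral_PiM_mixture[OF I N N0 N1 mixture g])
  moreover have "(\<integral>x. g x \<partial>PiM I N') = (\<Sum>S\<in>Pow I. bernoulli_weight r I S * G S)"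
    unfolding G_def by (rule integral_PiM_mixture[OF I N' N0 N1 mixture' g])
  ultimately have "(\<integral>x. g x \<partial>PiM I N) - (\<integral>x. g x \<partial>PiM I N')
      = (\<Sum>S\<in>Pow I. (bernoulli_weight q I S - bernoulli_weight r I S) * G S)"
    by (simp only: sum_subtractf[symmetric] left_diff_distrib)
  also have "\<bar>\<dots>\<bar> \<le> (\<Sum>S\<in>Pow I. \<bar>bernoulli_weight q I S - bernoulli_weight r I S\<bar> * B)"
    by (rule order_trans[OF sum_abs]) (auto intro!: sum_mono mult_left_mono simp: abs_mult G)
  finally show ?thesis by (simp add: sum_distrib_left mult.commute)
qed

lemma sum_bernoulli_weight_mult:
  assumes "finite I"
  shows "(\<Sum>S\<in>Pow I. bernoulli_weight q I S * bernoulli_weight r I S)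
       = (\<Prod>k\<in>I. q k * r k + (1 - q k) * (1 - r k))"
  by (simp add: prod_add[OF assms] bernoulli_weight_def prod.distrib mult_ac)

lemma sum_abs_bernoulli_weight_diff_sq_le:
  fixes e :: "'i \<Rightarrow> real"
  assumes I: "finite I"
  defines "wp \<equiv> bernoulli_weight (\<lambda>k. 1/2 + e k) I" and "wm \<equiv> bernoulli_weight (\<lambda>k. 1/2 - e k) I"
  shows "(\<Sum>S\<in>Pow I. \<bar>wp S - wm S\<bar>)\<^sup>2
       \<le> 2 * ((\<Prod>k\<in>I. 1 + 4 * (e k)\<^sup>2) - (\<Prod>k\<in>I. 1 - 4 * (e k)\<^sup>2))"
proof -
  have "(\<Sum>S\<in>Pow I. \<bar>wp S - wm S\<bar> * 1)\<^sup>2 \<le> (\<Sum>S\<in>Pow I. \<bar>wp S - wm S\<bar>\<^sup>2) * (\<Sum>S\<in>Pow I. 1\<^sup>2)"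
    by (rule Cauchy_Schwarz_ineq_sum)
  also have "\<dots> = (\<Prod>k\<in>I. 2) * (\<Sum>S\<in>Pow I. wp S * wp S + wm S * wm S - 2 * (wp S * wm S))"
    using I by (simp add: card_Pow power2_eq_square algebra_simps)
  also have "\<dots> = (\<Prod>k\<in>I. 2) * ((\<Prod>k\<in>I. 1/2 + 2 * (e k)\<^sup>2) + (\<Prod>k\<in>I. 1/2 + 2 * (e k)\<^sup>2)
      - 2 * (\<Prod>k\<in>I. 1/2 - 2 * (e k)\<^sup>2))"
    unfolding sum_subtractf sum.distrib sum_distrib_left[symmetric] wp_def wm_def
      sum_bernoulli_weight_mult[OF I]
    by (simp add: power2_eq_square algebra_simps)
  also have "\<dots> = 2 * ((\<Prod>k\<in>I. 2 * (1/2 + 2 * (e k)\<^sup>2)) - (\<Prod>k\<in>I. 2 * (1/2 - 2 * (e k)\<^sup>2)))"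
    unfolding prod.distrib by (simp add: algebra_simps)
  also have "\<dots> = 2 * ((\<Prod>k\<in>I. 1 + 4 * (e k)\<^sup>2) - (\<Prod>k\<in>I. 1 - 4 * (e k)\<^sup>2))"
    by (simp add: ring_distribs)
  finally show ?thesis by simp
qed

lemma one_plus_pow_minus_one_minus_pow_le:
  fixes x :: real
  assumes x: "0 \<le> x" "real n * x \<le> 1"
  shows "(1 + x) ^ n - (1 - x) ^ n \<le> 2 * (real n * x) + (real n * x)\<^sup>2"
proof (cases "n = 0")
  case False
  have "(1 + x) ^ n \<le> exp x ^ n"
    using x by (intro power_mono) (auto simp: add.commute exp_ge_add_one_self)
  also have "\<dots> = exp (real n * x)" by (simp add: exp_of_nat_mult)
  also have "\<dots> \<le> 1 + real n * x + (real n * x)\<^sup>2" using x by (intro exp_bound) auto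
  finally have "(1 + x) ^ n \<le> 1 + real n * x + (real n * x)\<^sup>2" .
  moreover have "x \<le> real n * x" using False x by (simp add: mult_le_cancel_right1)
  then have "1 - real n * x \<le> (1 - x) ^ n"
    using Bernoulli_inequality[of "-x" n] x by simp
  ultimately show ?thesis by simp
qed simp

section \<open>Convex combinations of distribution functions\<close>

definition cdf_path :: "(real \<Rightarrow> real) \<Rightarrow> (real \<Rightarrow> real) \<Rightarrow> real \<Rightarrow> real \<Rightarrow> real" where
  "cdf_path H1 H2 \<tau> = (\<lambda>x. \<tau> * H1 x + (1 - \<tau>) * H2 x)"

lemma tendsto_cdf_path:
  assumes "(H1 \<longlongrightarrow> l) F" "(H2 \<longlongrightarrow> l) F"
  shows "(cdf_path H1 H2 \<tau> \<longlongrightarrow> l) F"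
proof -
  have "((\<lambda>x. \<tau> * H1 x + (1 - \<tau>) * H2 x) \<longlongrightarrow> \<tau> * l + (1 - \<tau>) * l) F"
    by (intro tendsto_intros assms)
  then show ?thesis by (simp add: cdf_path_def algebra_simps)
qed

lemma is_cdf_cdf_path:
  assumes H1: "is_cdf H1" and H2: "is_cdf H2" and \<tau>: "0 \<le> \<tau>" "\<tau> \<le> 1"
  shows "is_cdf (cdf_path H1 H2 \<tau>)"
proof -
  have "mono (cdf_path H1 H2 \<tau>)"
    using H1 H2 \<tau> unfolding is_cdf_def mono_def cdf_path_def
    by (auto intro!: add_mono mult_left_mono)
  moreover have "continuous (at_right x) (cdf_path H1 H2 \<tau>)" for x
    using H1 H2 unfolding is_cdf_def cdf_path_def by (auto intro!: continuous_intros)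
  ultimately show ?thesis
    using H1 H2 by (simp add: is_cdf_def tendsto_cdf_path)
qed

lemma cdf_path_Dcdf:
  assumes H1: "H1 \<in> Dcdf a b" and H2: "H2 \<in> Dcdf a b" and \<tau>: "0 \<le> \<tau>" "\<tau> \<le> 1"
  shows "cdf_path H1 H2 \<tau> \<in> Dcdf a b"
  using assms is_cdf_cdf_path[OF _ _ \<tau>] by (simp add: Dcdf_def tendsto_cdf_path) (simp add: cdf_path_def)

lemma is_cdf_interval_measure:
  assumes "is_cdf F"
  shows "real_distribution (interval_measure F)" "cdf (interval_measure F) = F"
  using assms real_distribution_interval_measure cdf_interval_measure
  by (auto simp: is_cdf_def mono_def)

lemma prob_space_restrict_Dcdf:
  assumes F: "F \<in> Dcdf a b" and ab: "a \<le> b"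
  shows "prob_space (restrict_space (interval_measure F) {a..b})"
proof -
  have F_cdf: "is_cdf F" and F_a: "(F \<longlongrightarrow> 0) (at_left a)" and F_b: "F b = 1"
    using F by (auto simp: Dcdf_def)
  interpret real_distribution "interval_measure F"
    by (rule is_cdf_interval_measure(1)[OF F_cdf])
  note cdf = is_cdf_interval_measure(2)[OF F_cdf]
  have "(F \<longlongrightarrow> prob {..<a}) (at_left a)"
    using cdf_at_left[of a] unfolding cdf .
  then have "prob {..<a} = 0"
    using F_a tendsto_unique[OF trivial_limit_at_left_real] by blast
  moreover have "prob {..b} = 1"
    using fun_cong[OF cdf, of b] F_b by (simp add: cdf_def)
  moreover have "prob ({..b} - {..<a}) = prob {..b} - prob {..<a}"
    using ab by (intro finite_measure_Diff) auto
  moreover have "{..b} - {..<a} = {a..b}" by auto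
  ultimately have "prob {a..b} = 1" by simp
  then show ?thesis
    by (intro prob_space_restrict_space) (simp_all add: emeasure_eq_measure)
qed

lemma integral_interval_measure_cdf_path:
  fixes h :: "real \<Rightarrow> real"
  assumes H1: "is_cdf H1" and H2: "is_cdf H2" and \<tau>: "0 \<le> \<tau>" "\<tau> \<le> 1"
    and h: "h \<in> borel_measurable borel" "\<And>x. \<bar>h x\<bar> \<le> B"
  shows "(\<integral>x. h x \<partial>interval_measure (cdf_path H1 H2 \<tau>))
       = \<tau> * (\<integral>x. h x \<partial>interval_measure H1) + (1 - \<tau>) * (\<integral>x. h x \<partial>interval_measure H2)"
proof -
  define N where "N b = (if b then interval_measure H1 else interval_measure H2)" for b
  define \<nu> where "\<nu> = measure_pmf (bernoulli_pmf \<tau>) \<bind> N"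
  have RD: "real_distribution (N b)" for b
    using is_cdf_interval_measure(1)[OF H1] is_cdf_interval_measure(1)[OF H2] by (simp add: N_def)
  have N_meas: "N \<in> measure_pmf (bernoulli_pmf \<tau>) \<rightarrow>\<^sub>M prob_algebra borel"
    using RD by (simp add: space_prob_algebra real_distribution_def real_distribution_axioms_def)
  have \<nu>_integral: "(\<integral>x. f x \<partial>\<nu>) = \<tau> * (\<integral>x. f x \<partial>N True) + (1 - \<tau>) * (\<integral>x. f x \<partial>N False)"
    if "f \<in> borel_measurable borel" "\<And>x. \<bar>f x\<bar> \<le> B'" for f :: "real \<Rightarrow> real" and B'
  proof -
    have "(\<integral>x. f x \<partial>\<nu>) = (\<integral>b. (\<integral>x. f x \<partial>N b) \<partial>measure_pmf (bernoulli_pmf \<tau>))"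
      unfolding \<nu>_def using that measurable_prob_algebraD[OF N_meas]
      by (intro integral_bind[where B'=1]) (auto intro!: AE_I2 prob_space.emeasure_le_1 RD
          real_distribution.axioms(1))
    also have "\<dots> = \<tau> * (\<integral>x. f x \<partial>N True) + (1 - \<tau>) * (\<integral>x. f x \<partial>N False)"
      using \<tau> by (subst integral_measure_pmf[of UNIV]) (auto simp: UNIV_bool)
    finally show ?thesis .
  qed
  have RD_\<nu>: "real_distribution \<nu>"
    unfolding \<nu>_def real_distribution_def real_distribution_axioms_def
    using prob_space_bind'[OF _ N_meas] sets_bind'[OF _ N_meas]
    by (simp add: space_prob_algebra prob_space_measure_pmf)
  interpret \<nu>: real_distribution \<nu> by (fact RD_\<nu>)
  have "cdf \<nu> = cdf_path H1 H2 \<tau>"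
  proof
    fix x
    have "cdf \<nu> x = (\<integral>y. indicator {..x} y \<partial>\<nu>)"
      by (simp add: cdf_def)
    also have "\<dots> = cdf_path H1 H2 \<tau> x"
      using \<nu>_integral[of "indicator {..x}" 1] fun_cong[OF is_cdf_interval_measure(2)[OF H1], of x]
        fun_cong[OF is_cdf_interval_measure(2)[OF H2], of x]
      by (simp add: N_def cdf_path_def cdf_def)
    finally show "cdf \<nu> x = cdf_path H1 H2 \<tau> x" .
  qed
  then have "\<nu> = interval_measure (cdf_path H1 H2 \<tau>)"
    using is_cdf_interval_measure[OF is_cdf_cdf_path[OF H1 H2 \<tau>]] RD_\<nu> cdf_unique by metis
  then show ?thesis
    using \<nu>_integral[OF h] by (simp add: N_def)
qed

lemma integral_restrict_cdf_path:
  fixes f :: "real \<Rightarrow> real"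
  assumes H1: "is_cdf H1" and H2: "is_cdf H2" and \<tau>: "0 \<le> \<tau>" "\<tau> \<le> 1"
    and f: "f \<in> borel_measurable (restrict_space borel {a..b})" "\<And>x. x \<in> {a..b} \<Longrightarrow> \<bar>f x\<bar> \<le> B"
  shows "(\<integral>x. f x \<partial>restrict_space (interval_measure (cdf_path H1 H2 \<tau>)) {a..b})
       = \<tau> * (\<integral>x. f x \<partial>restrict_space (interval_measure H1) {a..b})
         + (1 - \<tau>) * (\<integral>x. f x \<partial>restrict_space (interval_measure H2) {a..b})"
proof -
  have eq: "(\<integral>x. f x \<partial>restrict_space (interval_measure F) {a..b})
      = (\<integral>x. indicator {a..b} x * f x \<partial>interval_measure F)" for F
    by (simp add: integral_restrict_space)
  have meas: "(\<lambda>x. indicator {a..b} x * f x) \<in> borel_measurable borel"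
    using f(1) borel_measurable_restrict_space_iff[of "{a..b}" borel f] by simp
  have bound: "\<bar>indicator {a..b} x * f x\<bar> \<le> \<bar>B\<bar>" for x
    using f(2)[of x] by (auto simp: indicator_def)
  show ?thesis
    unfolding eq by (rule integral_interval_measure_cdf_path[OF H1 H2 \<tau> meas bound])
qed

definition sample_borel :: "real \<Rightarrow> real \<Rightarrow> nat \<Rightarrow> nat \<Rightarrow> ((nat \<times> nat \<Rightarrow> real) \<times> (nat \<Rightarrow> real)) measure" where
  "sample_borel a b K n =
     PiM ({1..n} \<times> {1..K}) (\<lambda>_. restrict_space borel {a..b}) \<Otimes>\<^sub>M PiM {1..Suc n} (\<lambda>_. borel)"

lemma sets_restrict_interval_measure:
  "sets (restrict_space (interval_measure F) {a..b}) = sets (restrict_space borel {a..b})"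
  by (rule sets_restrict_space_cong) simp

lemma sets_sample_space:
  assumes "sets PG = sets borel"
  shows "sets (sample_space a b K n F PG) = sets (sample_borel a b K n)"
  unfolding sample_space_def outcome_space_def sample_borel_def
  by (intro sets_pair_measure_cong sets_PiM_cong)
     (auto simp: assms sets_restrict_interval_measure split: prod.split)

lemma prob_space_sample_space:
  assumes ab: "a \<le> b" and F: "\<And>i. i \<in> {1..K} \<Longrightarrow> F i \<in> Dcdf a b" and PG: "prob_space PG"
  shows "prob_space (sample_space a b K n F PG)"
  unfolding sample_space_def outcome_space_def
  using prob_space_restrict_Dcdf[OF F ab] PG
  by (intro prob_space_pair prob_space_PiM) (auto split: prod.split)

lemma integral_sample_space_eq_integral_outcomes:
  fixes f :: "(nat \<times> nat \<Rightarrow> real) \<times> (nat \<Rightarrow> real) \<Rightarrow> real"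
  assumes ab: "a \<le> b" and F: "\<And>i. i \<in> {1..K} \<Longrightarrow> F i \<in> Dcdf a b"
    and PG: "prob_space PG" "sets PG = sets borel"
    and f: "f \<in> borel_measurable (sample_borel a b K n)"
      "\<And>\<omega>. \<omega> \<in> space (sample_borel a b K n) \<Longrightarrow> \<bar>f \<omega>\<bar> \<le> B"
  defines "h \<equiv> \<lambda>y. \<integral>g. f (y, g) \<partial>PiM {1..Suc n} (\<lambda>_. PG)"
  shows "(\<integral>\<omega>. f \<omega> \<partial>sample_space a b K n F PG) = (\<integral>y. h y \<partial>outcome_space a b K n F)"
    and "h \<in> borel_measurable (PiM ({1..n} \<times> {1..K}) (\<lambda>_. restrict_space borel {a..b}))"
    and "\<And>y. y \<in> space (PiM ({1..n} \<times> {1..K}) (\<lambda>_. restrict_space borel {a..b})) \<Longrightarrow> \<bar>h y\<bar> \<le> B"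
proof -
  let ?X = "PiM ({1..n} \<times> {1..K}) (\<lambda>_. restrict_space borel {a..b})"
  let ?PGn = "PiM {1..Suc n} (\<lambda>_. PG)"
  interpret PGn: prob_space ?PGn using PG(1) by (rule prob_space_PiM)
  interpret outcomes: prob_space "outcome_space a b K n F"
    unfolding outcome_space_def using prob_space_restrict_Dcdf[OF F ab]
    by (intro prob_space_PiM) (auto split: prod.split)
  interpret pair_prob_space "outcome_space a b K n F" ?PGn ..
  have "sets (?X \<Otimes>\<^sub>M ?PGn) = sets (sample_borel a b K n)"
    "sets (sample_space a b K n F PG) = sets (sample_borel a b K n)"
    unfolding sample_borel_def by (intro sets_pair_measure_cong sets_PiM_cong refl)
      (simp_all add: PG sets_sample_space[OF PG(2), unfolded sample_borel_def])
  then have f_pair: "f \<in> borel_measurable (?X \<Otimes>\<^sub>M ?PGn)"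
      "\<And>\<omega>. \<omega> \<in> space (?X \<Otimes>\<^sub>M ?PGn) \<Longrightarrow> \<bar>f \<omega>\<bar> \<le> B"
    and f_sample: "f \<in> borel_measurable (sample_space a b K n F PG)"
      "\<And>\<omega>. \<omega> \<in> space (sample_space a b K n F PG) \<Longrightarrow> \<bar>f \<omega>\<bar> \<le> B"
    using f measurable_cong_sets[OF _ refl] sets_eq_imp_space_eq by metis+
  show "h \<in> borel_measurable ?X"
    unfolding h_def by (rule PGn.borel_measurable_lebesgue_integral) (unfold case_prod_eta, rule f_pair(1))
  show "\<bar>h y\<bar> \<le> B" if "y \<in> space ?X" for y
    unfolding h_def using measurable_Pair2[OF f_pair(1) that] that
    by (intro PGn.abs_integral_le_bound) (auto intro: f_pair(2) simp: space_pair_measure)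
  have "integrable (sample_space a b K n F PG) f"
    using f_sample unfolding sample_space_def by (intro P.integrable_bounded)
  then show "(\<integral>\<omega>. f \<omega> \<partial>sample_space a b K n F PG) = (\<integral>y. h y \<partial>outcome_space a b K n F)"
    unfolding h_def sample_space_def by (rule integral_fst'[symmetric])
qed

definition perturbed_cdfs :: "(real \<Rightarrow> real) \<Rightarrow> (real \<Rightarrow> real) \<Rightarrow> nat \<Rightarrow> real \<Rightarrow> nat \<Rightarrow> real \<Rightarrow> real" where
  "perturbed_cdfs H1 H2 j e = (\<lambda>i. cdf_path H1 H2 (if i = j then 1/2 + e else 1/2))"

lemma perturbation_le_half:
  fixes \<epsilon> :: real
  assumes "96 * real n * \<epsilon>\<^sup>2 = 1"
  shows "\<bar>\<epsilon>\<bar> \<le> 1/2"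
proof -
  have "n \<noteq> 0" using assms by (intro notI) simp
  then have "96 * \<epsilon>\<^sup>2 \<le> 96 * real n * \<epsilon>\<^sup>2" by (intro mult_right_mono) auto
  then have "\<bar>\<epsilon>\<bar>\<^sup>2 \<le> (1/2)\<^sup>2" using assms by (simp add: power2_eq_square)
  then show ?thesis by (rule power2_le_imp_le) simp
qed

lemma prod_if_snd_eq_power:
  fixes \<alpha> :: "'a :: comm_monoid_mult"
  assumes "finite J" "j \<in> J"
  shows "(\<Prod>k\<in>{1..n::nat} \<times> J. if snd k = j then \<alpha> else 1) = \<alpha> ^ n"
proof -
  have "(\<Prod>k\<in>{1..n} \<times> J. if snd k = j then \<alpha> else 1) = (\<Prod>k\<in>{k \<in> {1..n} \<times> J. snd k = j}. \<alpha>)"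
    by (rule prod.inter_filter[symmetric]) (simp add: assms(1))
  also have "{k \<in> {1..n} \<times> J. snd k = j} = {1..n} \<times> {j}" using assms(2) by auto
  finally show ?thesis by (simp add: card_cartesian_product)
qed

lemma sum_abs_perturbed_bernoulli_weight_diff_le:
  fixes j K n :: nat and \<epsilon> :: real
  assumes j: "j \<in> {1..K}" and \<epsilon>: "96 * real n * \<epsilon>\<^sup>2 = 1"
  defines "I \<equiv> {1..n} \<times> {1..K}"
  shows "(\<Sum>S\<in>Pow I. \<bar>bernoulli_weight (\<lambda>k. if snd k = j then 1/2 + \<epsilon> else 1/2) I S
                     - bernoulli_weight (\<lambda>k. if snd k = j then 1/2 - \<epsilon> else 1/2) I S\<bar>) \<le> 1/2"
proof -
  define e where "e k = (if snd k = j then \<epsilon> else 0)" for k :: "nat \<times> nat"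
  define x where "x = 4 * \<epsilon>\<^sup>2"
  have x: "0 \<le> x" "real n * x = 1/24" using \<epsilon> by (simp_all add: x_def)
  have "1 + 4 * (e k)\<^sup>2 = (if snd k = j then 1 + x else 1)"
    "1 - 4 * (e k)\<^sup>2 = (if snd k = j then 1 - x else 1)" for k
    by (simp_all add: e_def x_def)
  then have prods: "(\<Prod>k\<in>I. 1 + 4 * (e k)\<^sup>2) = (1 + x) ^ n" "(\<Prod>k\<in>I. 1 - 4 * (e k)\<^sup>2) = (1 - x) ^ n"
    unfolding I_def by (simp_all only:) (rule prod_if_snd_eq_power[OF _ j], simp)+
  have "(\<lambda>k. if snd k = j then 1/2 + \<epsilon> else 1/2) = (\<lambda>k. 1/2 + e k)"
    "(\<lambda>k. if snd k = j then 1/2 - \<epsilon> else 1/2) = (\<lambda>k. 1/2 - e k)"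
    by (auto simp: e_def)
  moreover have "(\<Sum>S\<in>Pow I. \<bar>bernoulli_weight (\<lambda>k. 1/2 + e k) I S - bernoulli_weight (\<lambda>k. 1/2 - e k) I S\<bar>)\<^sup>2
      \<le> (1/2)\<^sup>2"
  proof -
    have "2 * ((1 + x) ^ n - (1 - x) ^ n) \<le> (1/2)\<^sup>2"
      using one_plus_pow_minus_one_minus_pow_le[OF x(1), of n] x(2) by (simp add: power2_eq_square)
    moreover have "finite I" by (simp add: I_def)
    ultimately show ?thesis
      using sum_abs_bernoulli_weight_diff_sq_le[of I e] unfolding prods by linarith
  qed
  ultimately show ?thesis
    by (auto intro: power2_le_imp_le)
qed

lemma abs_integral_sample_space_perturbed_diff_le:
  fixes j K n :: nat and \<epsilon> B :: real and f :: "(nat \<times> nat \<Rightarrow> real) \<times> (nat \<Rightarrow> real) \<Rightarrow> real"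
  assumes ab: "a \<le> b" and H1: "H1 \<in> Dcdf a b" and H2: "H2 \<in> Dcdf a b"
    and PG: "prob_space PG" "sets PG = sets borel"
    and j: "j \<in> {1..K}" and \<epsilon>: "96 * real n * \<epsilon>\<^sup>2 = 1"
    and f: "f \<in> borel_measurable (sample_borel a b K n)"
      "\<And>\<omega>. \<omega> \<in> space (sample_borel a b K n) \<Longrightarrow> \<bar>f \<omega>\<bar> \<le> B"
  shows "\<bar>(\<integral>\<omega>. f \<omega> \<partial>sample_space a b K n (perturbed_cdfs H1 H2 j \<epsilon>) PG)
          - (\<integral>\<omega>. f \<omega> \<partial>sample_space a b K n (perturbed_cdfs H1 H2 j (-\<epsilon>)) PG)\<bar> \<le> B / 2"
proof -
  define I where "I = {1..n} \<times> {1..K}"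
  define X where "X = restrict_space borel {a..b}"
  define q where "q e k = (if snd k = j then 1/2 + e else 1/2)" for e :: real and k :: "nat \<times> nat"
  define N where "N e k = restrict_space (interval_measure (cdf_path H1 H2 (q e k))) {a..b}" for e k
  define h where "h y = (\<integral>g. f (y, g) \<partial>PiM {1..Suc n} (\<lambda>_. PG))" for y
  have \<epsilon>_half: "\<bar>\<epsilon>\<bar> \<le> 1/2" "\<bar>-\<epsilon>\<bar> \<le> 1/2" using perturbation_le_half[OF \<epsilon>] by simp_all
  have q01: "0 \<le> q e k" "q e k \<le> 1" if "\<bar>e\<bar> \<le> 1/2" for e k
    using that by (auto simp: q_def)
  have N: "prob_space (N e k)" "sets (N e k) = sets X" if "\<bar>e\<bar> \<le> 1/2" for e k
    using prob_space_restrict_Dcdf[OF cdf_path_Dcdf[OF H1 H2 q01[OF that]] ab]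
    by (simp_all add: N_def X_def sets_restrict_interval_measure)
  have N01: "prob_space (restrict_space (interval_measure H) {a..b})"
    "sets (restrict_space (interval_measure H) {a..b}) = sets X" if "H \<in> {H1, H2}" for H
    using prob_space_restrict_Dcdf[OF _ ab] that H1 H2
    by (auto simp: X_def sets_restrict_interval_measure)
  have mixture: "(\<integral>y. u y \<partial>N e k)
      = q e k * (\<integral>y. u y \<partial>restrict_space (interval_measure H1) {a..b})
        + (1 - q e k) * (\<integral>y. u y \<partial>restrict_space (interval_measure H2) {a..b})"
    if "\<bar>e\<bar> \<le> 1/2" "u \<in> borel_measurable X" "\<And>y. y \<in> space X \<Longrightarrow> \<bar>u y\<bar> \<le> B'" for e k u B'
    using that(2,3) H1 H2 unfolding N_def X_def
    by (intro integral_restrict_cdf_path[OF _ _ q01[OF that(1)]]) (auto simp: Dcdf_def)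
  have sample: "(\<integral>\<omega>. f \<omega> \<partial>sample_space a b K n (perturbed_cdfs H1 H2 j e) PG) = (\<integral>y. h y \<partial>PiM I (N e))"
    and h: "h \<in> borel_measurable (PiM I (\<lambda>_. X))" "\<And>y. y \<in> space (PiM I (\<lambda>_. X)) \<Longrightarrow> \<bar>h y\<bar> \<le> B"
    if "\<bar>e\<bar> \<le> 1/2" for e
  proof -
    have "outcome_space a b K n (perturbed_cdfs H1 H2 j e) = PiM I (N e)"
      unfolding outcome_space_def perturbed_cdfs_def I_def
      by (intro PiM_cong refl) (auto simp: N_def q_def)
    moreover have F: "perturbed_cdfs H1 H2 j e i \<in> Dcdf a b" if "i \<in> {1..K}" for i
      unfolding perturbed_cdfs_def using q01[OF \<open>\<bar>e\<bar> \<le> 1/2\<close>, of "(0, i)"]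
      by (intro cdf_path_Dcdf[OF H1 H2]) (auto simp: q_def)
    note outcomes = integral_sample_space_eq_integral_outcomes[OF ab F PG f]
    ultimately show "(\<integral>\<omega>. f \<omega> \<partial>sample_space a b K n (perturbed_cdfs H1 H2 j e) PG) = (\<integral>y. h y \<partial>PiM I (N e))"
      "h \<in> borel_measurable (PiM I (\<lambda>_. X))" "\<And>y. y \<in> space (PiM I (\<lambda>_. X)) \<Longrightarrow> \<bar>h y\<bar> \<le> B"
      using outcomes by (simp_all add: h_def[abs_def] I_def X_def)
  qed
  have "0 \<le> B"
  proof -
    interpret prob_space "PiM I (N \<epsilon>)" using N[OF \<epsilon>_half(1)] by (intro prob_space_PiM)
    obtain y where "y \<in> space (PiM I (N \<epsilon>))" using not_empty by blast
    then show ?thesis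
      using h(2)[OF \<epsilon>_half(1), of y] by (simp add: PiM_sets_const(2)[OF N(2)[OF \<epsilon>_half(1)]])
  qed
  have "\<bar>(\<integral>y. h y \<partial>PiM I (N \<epsilon>)) - (\<integral>y. h y \<partial>PiM I (N (-\<epsilon>)))\<bar>
      \<le> B * (\<Sum>S\<in>Pow I. \<bar>bernoulli_weight (q \<epsilon>) I S - bernoulli_weight (q (-\<epsilon>)) I S\<bar>)"
    by (rule abs_integral_PiM_mixture_diff_le[OF _ N[OF \<epsilon>_half(1)] N[OF \<epsilon>_half(2)] N01 N01
          mixture[OF \<epsilon>_half(1)] mixture[OF \<epsilon>_half(2)] h[OF \<epsilon>_half(1)]]) (simp_all add: I_def)
  also have "\<dots> \<le> B * (1/2)"
  proof -
    have "q \<epsilon> = (\<lambda>k. if snd k = j then 1/2 + \<epsilon> else 1/2)"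
      "q (-\<epsilon>) = (\<lambda>k. if snd k = j then 1/2 - \<epsilon> else 1/2)"
      by (simp_all add: q_def fun_eq_iff)
    then show ?thesis
      using sum_abs_perturbed_bernoulli_weight_diff_le[OF j \<epsilon>] \<open>0 \<le> B\<close>
      by (intro mult_left_mono) (simp_all add: I_def)
  qed
  finally show ?thesis
    using sample \<epsilon>_half by simp
qed

lemma measurable_hist:
  assumes pol: "\<forall>t\<in>{1..n}. (\<lambda>(h, g). pol n t h g) \<in> Hspace a b (t - 1) \<Otimes>\<^sub>M borel \<rightarrow>\<^sub>M count_space {1..K}"
  shows "t \<le> n \<Longrightarrow> (\<lambda>\<omega>. hist pol n (fst \<omega>) (snd \<omega>) t) \<in> sample_borel a b K n \<rightarrow>\<^sub>M Hspace a b t"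
proof (induction t)
  case 0
  show ?case by (simp add: Hspace_def PiM_empty)
next
  case (Suc t)
  let ?H = "\<lambda>\<omega>. hist pol n (fst \<omega>) (snd \<omega>) t"
  let ?arm = "\<lambda>\<omega>. pol n (Suc t) (?H \<omega>) (snd \<omega> (Suc t))"
  have G: "(\<lambda>\<omega>. snd \<omega> (Suc t)) \<in> borel_measurable (sample_borel a b K n)"
    unfolding sample_borel_def using Suc(2) by simp
  have "(\<lambda>\<omega>. (?H \<omega>, snd \<omega> (Suc t))) \<in> sample_borel a b K n \<rightarrow>\<^sub>M Hspace a b t \<Otimes>\<^sub>M borel"
    using Suc by (intro measurable_Pair G) simp
  moreover have "(\<lambda>(h, g). pol n (Suc t) h g) \<in> Hspace a b t \<Otimes>\<^sub>M borel \<rightarrow>\<^sub>M count_space {1..K}"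
    using bspec[OF pol, of "Suc t"] Suc(2) by simp
  ultimately have arm: "?arm \<in> sample_borel a b K n \<rightarrow>\<^sub>M count_space {1..K}"
    by (simp add: measurable_comp[unfolded comp_def])
  have "(\<lambda>\<omega>. fst \<omega> (Suc t, i)) \<in> sample_borel a b K n \<rightarrow>\<^sub>M restrict_space borel {a..b}"
    if "i \<in> {1..K}" for i
    unfolding sample_borel_def using Suc(2) that by simp
  then have Y: "(\<lambda>\<omega>. fst \<omega> (Suc t, ?arm \<omega>)) \<in> sample_borel a b K n \<rightarrow>\<^sub>M restrict_space borel {a..b}"
    by (rule measurable_compose_countable'[OF _ arm]) auto
  have "(\<lambda>\<omega>. (?H \<omega>, (fst \<omega> (Suc t, ?arm \<omega>), snd \<omega> (Suc t))))
      \<in> sample_borel a b K n \<rightarrow>\<^sub>M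
         PiM {1..t} (\<lambda>_. restrict_space borel {a..b} \<Otimes>\<^sub>M borel) \<Otimes>\<^sub>M (restrict_space borel {a..b} \<Otimes>\<^sub>M borel)"
    using Suc by (intro measurable_Pair Y G) (simp_all add: Hspace_def)
  from measurable_comp[OF this measurable_add_dim]
  have upd: "(\<lambda>\<omega>. (?H \<omega>)(Suc t := (fst \<omega> (Suc t, ?arm \<omega>), snd \<omega> (Suc t))))
      \<in> sample_borel a b K n \<rightarrow>\<^sub>M PiM (insert (Suc t) {1..t}) (\<lambda>_. restrict_space borel {a..b} \<Otimes>\<^sub>M borel)"
    by (simp add: comp_def)
  have "{1..Suc t} = insert (Suc t) {1..t}" by auto
  then show ?case
    unfolding hist.simps Hspace_def by (simp only: upd)
qed

definition recommendation ::
    "(nat \<Rightarrow> nat \<Rightarrow> (nat \<Rightarrow> real \<times> real) \<Rightarrow> real \<Rightarrow> nat)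
     \<Rightarrow> (nat \<Rightarrow> (nat \<Rightarrow> real \<times> real) \<Rightarrow> real \<Rightarrow> (nat \<Rightarrow> real))
     \<Rightarrow> nat \<Rightarrow> (nat \<times> nat \<Rightarrow> real) \<times> (nat \<Rightarrow> real) \<Rightarrow> (nat \<Rightarrow> real)" where
  "recommendation pol recm n \<omega> = recm n (hist pol n (fst \<omega>) (snd \<omega>) n) (snd \<omega> (Suc n))"

lemma measurable_recommendation:
  assumes "is_policy K a b M pol recm" "K \<le> n"
  shows "recommendation pol recm n \<in> sample_borel a b K n \<rightarrow>\<^sub>M restrict_space (PiM {1..K} (\<lambda>_. borel)) M"
proof -
  have H: "(\<lambda>\<omega>. hist pol n (fst \<omega>) (snd \<omega>) n) \<in> sample_borel a b K n \<rightarrow>\<^sub>M Hspace a b n"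
    using assms by (intro measurable_hist) (auto simp: is_policy_def)
  have G: "(\<lambda>\<omega>. snd \<omega> (Suc n)) \<in> borel_measurable (sample_borel a b K n)"
    unfolding sample_borel_def by simp
  have "(\<lambda>(h, g). recm n h g) \<in> Hspace a b n \<Otimes>\<^sub>M borel \<rightarrow>\<^sub>M restrict_space (PiM {1..K} (\<lambda>_. borel)) M"
    using assms unfolding is_policy_def by blast
  from measurable_comp[OF measurable_Pair[OF H G] this] show ?thesis
    by (simp add: comp_def recommendation_def[abs_def])
qed

lemma simplexK_coordinate:
  assumes "\<delta> \<in> simplexK K" "i \<in> {1..K}"
  shows "0 \<le> \<delta> i" "\<delta> i \<le> 1"
  using assms by (auto simp: simplexK_def PiE_def Pi_def)

lemma mix_cdf_path:
  assumes \<delta>: "\<delta> \<in> simplexK K" and F: "\<And>i. i \<in> {1..K} \<Longrightarrow> F i = cdf_path H1 H2 (\<tau> i)"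
  shows "mix K \<delta> F = cdf_path H1 H2 (\<Sum>i=1..K. \<delta> i * \<tau> i)"
proof
  fix x
  have "mix K \<delta> F x = (\<Sum>i=1..K. \<delta> i * H2 x + (\<delta> i * \<tau> i) * (H1 x - H2 x))"
    unfolding mix_def using F by (intro sum.cong) (auto simp: cdf_path_def algebra_simps)
  also have "\<dots> = (\<Sum>i=1..K. \<delta> i) * H2 x + (\<Sum>i=1..K. \<delta> i * \<tau> i) * (H1 x - H2 x)"
    by (simp add: sum.distrib sum_distrib_right)
  also have "\<dots> = cdf_path H1 H2 (\<Sum>i=1..K. \<delta> i * \<tau> i) x"
    using \<delta> by (simp add: simplexK_def cdf_path_def algebra_simps)
  finally show "mix K \<delta> F x = cdf_path H1 H2 (\<Sum>i=1..K. \<delta> i * \<tau> i) x" .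
qed

lemma mix_perturbed_cdfs:
  assumes \<delta>: "\<delta> \<in> simplexK K" and j: "j \<in> {1..K}"
  shows "mix K \<delta> (perturbed_cdfs H1 H2 j e) = cdf_path H1 H2 (1/2 + e * \<delta> j)"
proof -
  have "(\<Sum>i=1..K. \<delta> i * (if i = j then 1/2 + e else 1/2)) = (\<Sum>i=1..K. \<delta> i / 2 + (if i = j then e * \<delta> i else 0))"
    by (intro sum.cong) (auto simp: algebra_simps)
  also have "\<dots> = 1/2 + e * \<delta> j"
    using \<delta> j by (simp add: sum.distrib sum_divide_distrib[symmetric] simplexK_def)
  finally have "(\<Sum>i=1..K. \<delta> i * (if i = j then 1/2 + e else 1/2)) = 1/2 + e * \<delta> j" .
  moreover have "mix K \<delta> (perturbed_cdfs H1 H2 j e)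
      = cdf_path H1 H2 (\<Sum>i=1..K. \<delta> i * (if i = j then 1/2 + e else 1/2))"
    by (rule mix_cdf_path[OF \<delta>]) (simp add: perturbed_cdfs_def)
  ultimately show ?thesis by simp
qed

lemma mix_cdf_path_range:
  assumes \<delta>: "\<delta> \<in> simplexK K" and F: "\<And>i. i \<in> {1..K} \<Longrightarrow> F i \<in> cdf_path H1 H2 ` {0..1}"
  shows "\<exists>t\<in>{0..1}. mix K \<delta> F = cdf_path H1 H2 t"
proof -
  have "\<forall>i\<in>{1..K}. \<exists>t\<in>{0..1}. F i = cdf_path H1 H2 t" using F by blast
  then obtain \<tau> where \<tau>: "\<And>i. i \<in> {1..K} \<Longrightarrow> \<tau> i \<in> {0..1} \<and> F i = cdf_path H1 H2 (\<tau> i)"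
    by metis
  have sum1: "(\<Sum>i=1..K. \<delta> i) = 1" using \<delta> by (simp add: simplexK_def)
  have "(\<Sum>i=1..K. \<delta> i * \<tau> i) \<le> (\<Sum>i=1..K. \<delta> i)"
    using simplexK_coordinate[OF \<delta>] \<tau> by (intro sum_mono) (auto intro: mult_left_le)
  then have "(\<Sum>i=1..K. \<delta> i * \<tau> i) \<in> {0..1}"
    using simplexK_coordinate[OF \<delta>] \<tau> sum1 by (auto intro!: sum_nonneg)
  then show ?thesis
    using mix_cdf_path[OF \<delta>, where F=F and \<tau>=\<tau>] \<tau> by blast
qed

lemma simplexK_L2_set_diff_sq_le:
  assumes \<nu>: "\<nu> \<in> simplexK K" and \<gamma>: "\<gamma> \<in> simplexK K" and K: "0 < K"
  shows "\<exists>j\<in>{1..K}. (L2_set (\<lambda>i. \<nu> i - \<gamma> i) {1..K})\<^sup>2 \<le> 2 * \<bar>\<nu> j - \<gamma> j\<bar>"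
proof -
  have "Max ((\<lambda>i. \<bar>\<nu> i - \<gamma> i\<bar>) ` {1..K}) \<in> (\<lambda>i. \<bar>\<nu> i - \<gamma> i\<bar>) ` {1..K}"
    using K by (intro Max_in) auto
  then obtain j where j: "j \<in> {1..K}" "\<bar>\<nu> j - \<gamma> j\<bar> = Max ((\<lambda>i. \<bar>\<nu> i - \<gamma> i\<bar>) ` {1..K})"
    by (auto simp del: Max_in)
  have "(L2_set (\<lambda>i. \<nu> i - \<gamma> i) {1..K})\<^sup>2 = (\<Sum>i=1..K. \<bar>\<nu> i - \<gamma> i\<bar> * \<bar>\<nu> i - \<gamma> i\<bar>)"
    unfolding L2_set_def by (simp add: sum_nonneg power2_eq_square)
  also have "\<dots> \<le> (\<Sum>i=1..K. \<bar>\<nu> j - \<gamma> j\<bar> * (\<nu> i + \<gamma> i))"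
  proof (rule sum_mono)
    fix i assume i: "i \<in> {1..K}"
    have "\<bar>\<nu> i - \<gamma> i\<bar> \<le> \<bar>\<nu> j - \<gamma> j\<bar>" unfolding j(2) using i by (intro Max_ge) auto
    moreover have "\<bar>\<nu> i - \<gamma> i\<bar> \<le> \<nu> i + \<gamma> i"
      using simplexK_coordinate[OF \<nu> i] simplexK_coordinate[OF \<gamma> i] by linarith
    ultimately show "\<bar>\<nu> i - \<gamma> i\<bar> * \<bar>\<nu> i - \<gamma> i\<bar> \<le> \<bar>\<nu> j - \<gamma> j\<bar> * (\<nu> i + \<gamma> i)"
      by (intro mult_mono) auto
  qed
  also have "\<dots> = \<bar>\<nu> j - \<gamma> j\<bar> * ((\<Sum>i=1..K. \<nu> i) + (\<Sum>i=1..K. \<gamma> i))"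
    by (simp add: sum_distrib_left sum.distrib distrib_left)
  also have "\<dots> = 2 * \<bar>\<nu> j - \<gamma> j\<bar>"
    using \<nu> \<gamma> by (simp add: simplexK_def)
  finally show ?thesis using j(1) by blast
qed

lemma diamK_sq_le:
  assumes "M \<noteq> {}" and bound: "\<And>\<nu> \<gamma>. \<nu> \<in> M \<Longrightarrow> \<gamma> \<in> M \<Longrightarrow> (L2_set (\<lambda>i. \<nu> i - \<gamma> i) {1..K})\<^sup>2 \<le> X"
  shows "(diamK K M)\<^sup>2 \<le> X"
proof -
  have le: "L2_set (\<lambda>i. fst p i - snd p i) {1..K} \<le> sqrt X" if "p \<in> M \<times> M" for p
    using bound[of "fst p" "snd p"] that by (auto intro: real_le_rsqrt)
  obtain \<nu> where \<nu>: "\<nu> \<in> M" using assms(1) by blast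
  have "0 \<le> diamK K M"
    unfolding diamK_def
    using cSUP_upper[of "(\<nu>, \<nu>)" "M \<times> M" "\<lambda>p. L2_set (\<lambda>i. fst p i - snd p i) {1..K}"] le \<nu>
    by (fastforce intro: order_trans[OF L2_set_nonneg] simp: bdd_above_def)
  moreover have "diamK K M \<le> sqrt X"
    unfolding diamK_def using \<nu> le by (intro cSUP_least) auto
  moreover have "0 \<le> X" using bound[OF \<nu> \<nu>] by (auto intro: order_trans[rotated])
  ultimately show ?thesis
    by (metis real_sqrt_le_iff real_sqrt_pow2 real_sqrt_power)
qed

section \<open>The two-point lower bound\<close>

lemma two_point_lower_bound:
  fixes \<phi>P \<phi>Q LP LQ :: "'a \<Rightarrow> real"
  assumes P: "prob_space P" and Q: "prob_space Q" and sets_eq: "sets Q = sets P"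
    and \<phi>: "\<phi>P \<in> borel_measurable P" "\<phi>Q \<in> borel_measurable P"
      "\<And>x. x \<in> space P \<Longrightarrow> \<bar>\<phi>P x\<bar> \<le> B" "\<And>x. x \<in> space P \<Longrightarrow> \<bar>\<phi>Q x\<bar> \<le> B"
    and cover: "\<And>x. x \<in> space P \<Longrightarrow> B \<le> \<phi>P x + \<phi>Q x"
    and LP: "integrable P LP" "\<And>x. x \<in> space P \<Longrightarrow> \<phi>P x \<le> LP x"
    and LQ: "integrable Q LQ" "\<And>x. x \<in> space P \<Longrightarrow> \<phi>Q x \<le> LQ x"
    and close: "\<bar>(\<integral>x. \<phi>Q x \<partial>P) - (\<integral>x. \<phi>Q x \<partial>Q)\<bar> \<le> B / 2"
  shows "B / 2 \<le> (\<integral>x. LP x \<partial>P) + (\<integral>x. LQ x \<partial>Q)"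
proof -
  interpret P: prob_space P by (fact P)
  interpret Q: prob_space Q by (fact Q)
  have space_eq: "space Q = space P" using sets_eq by (rule sets_eq_imp_space_eq)
  have int_P: "integrable P \<phi>P" "integrable P \<phi>Q"
    using \<phi> by (auto intro: P.integrable_bounded)
  have int_Q: "integrable Q \<phi>Q"
    using \<phi>(2,4) by (intro Q.integrable_bounded) (simp_all add: measurable_cong_sets[OF sets_eq refl] space_eq)
  have "B = (\<integral>x. B \<partial>P)" by (simp add: P.prob_space)
  also have "\<dots> \<le> (\<integral>x. \<phi>P x + \<phi>Q x \<partial>P)"
    using int_P cover by (intro integral_mono) auto
  also have "\<dots> = (\<integral>x. \<phi>P x \<partial>P) + (\<integral>x. \<phi>Q x \<partial>P)"
    using int_P by simp
  also have "\<dots> \<le> (\<integral>x. LP x \<partial>P) + ((\<integral>x. \<phi>Q x \<partial>Q) + B / 2)"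
    using int_P LP close unfolding abs_le_iff by (intro add_mono integral_mono) auto
  also have "\<dots> \<le> (\<integral>x. LP x \<partial>P) + (\<integral>x. LQ x \<partial>Q) + B / 2"
    using int_Q LQ space_eq by (auto intro: integral_mono)
  finally show ?thesis by simp
qed

locale regret_lower_bound =
  fixes a b c_minus :: real and H1 H2 :: "real \<Rightarrow> real" and T :: "(real \<Rightarrow> real) \<Rightarrow> real"
    and K n :: nat and M :: "(nat \<Rightarrow> real) set"
    and pol :: "nat \<Rightarrow> nat \<Rightarrow> (nat \<Rightarrow> real \<times> real) \<Rightarrow> real \<Rightarrow> nat"
    and recm :: "nat \<Rightarrow> (nat \<Rightarrow> real \<times> real) \<Rightarrow> real \<Rightarrow> (nat \<Rightarrow> real)"
    and PG :: "real measure"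
  assumes ab: "a \<le> b" and H1: "H1 \<in> Dcdf a b" and H2: "H2 \<in> Dcdf a b"
    and c_minus_pos: "0 < c_minus"
    and T_incr: "\<And>\<tau>1 \<tau>2. 0 \<le> \<tau>1 \<Longrightarrow> \<tau>1 \<le> \<tau>2 \<Longrightarrow> \<tau>2 \<le> 1 \<Longrightarrow>
      c_minus * (\<tau>2 - \<tau>1) \<le> T (cdf_path H1 H2 \<tau>2) - T (cdf_path H1 H2 \<tau>1)"
    and M: "M \<subseteq> simplexK K" "M \<noteq> {}"
    and policy: "is_policy K a b M pol recm"
    and PG: "prob_space PG" "sets PG = sets borel"
    and K: "0 < K" and n: "K \<le> n"
begin

definition V :: "real \<Rightarrow> real" where
  "V \<tau> = T (cdf_path H1 H2 \<tau>)"

abbreviation R :: "(nat \<times> nat \<Rightarrow> real) \<times> (nat \<Rightarrow> real) \<Rightarrow> (nat \<Rightarrow> real)" where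
  "R \<equiv> recommendation pol recm n"

abbreviation ER :: "(nat \<Rightarrow> real \<Rightarrow> real) \<Rightarrow> real" where
  "ER F \<equiv> expected_regret a b T K M pol recm F PG n"

lemma V_mono:
  assumes "0 \<le> x" "x \<le> y" "y \<le> 1"
  shows "V x \<le> V y"
proof -
  have "0 \<le> c_minus * (y - x)" using c_minus_pos assms by simp
  then show ?thesis using T_incr[OF assms] by (simp add: V_def)
qed

lemma R_in_M: "\<omega> \<in> space (sample_borel a b K n) \<Longrightarrow> R \<omega> \<in> M"
  using measurable_space[OF measurable_recommendation[OF policy n]] by (simp add: space_restrict_space)

lemma sample_space_sets:
  "sets (sample_space a b K n F PG) = sets (sample_borel a b K n)"
  "space (sample_space a b K n F PG) = space (sample_borel a b K n)"
  by (rule sets_sample_space[OF PG(2)], rule sets_eq_imp_space_eq[OF sets_sample_space[OF PG(2)]])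

lemma regret_le:
  assumes F: "\<And>i. i \<in> {1..K} \<Longrightarrow> F i \<in> cdf_path H1 H2 ` {0..1}"
    and \<omega>: "\<omega> \<in> space (sample_borel a b K n)"
  shows "regret T K M pol recm F n (fst \<omega>) (snd \<omega>) \<le> V 1 - V 0"
proof -
  have bounds: "V 0 \<le> T (mix K \<delta> F) \<and> T (mix K \<delta> F) \<le> V 1" if "\<delta> \<in> M" for \<delta>
  proof -
    have "\<delta> \<in> simplexK K" using that M(1) by blast
    then obtain t where "t \<in> {0..1}" "mix K \<delta> F = cdf_path H1 H2 t"
      using mix_cdf_path_range[where F=F, OF _ F] by blast
    then show ?thesis using V_mono[of 0 t] V_mono[of t 1] by (simp add: V_def)
  qed
  then have "(SUP \<delta>\<in>M. T (mix K \<delta> F)) \<le> V 1"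
    using M(2) by (intro cSUP_least) auto
  moreover have "V 0 \<le> T (mix K (R \<omega>) F)" using bounds[OF R_in_M[OF \<omega>]] by simp
  ultimately show ?thesis by (simp add: regret_def recommendation_def)
qed

lemma expected_regret_le:
  assumes F: "\<And>i. i \<in> {1..K} \<Longrightarrow> F i \<in> cdf_path H1 H2 ` {0..1}"
  shows "ER F \<le> V 1 - V 0"
proof (cases "integrable (sample_space a b K n F PG) (\<lambda>\<omega>. regret T K M pol recm F n (fst \<omega>) (snd \<omega>))")
  case True
  have "\<forall>i\<in>{1..K}. F i \<in> Dcdf a b"
    using F cdf_path_Dcdf[OF H1 H2] by fastforce
  then interpret prob_space "sample_space a b K n F PG"
    using prob_space_sample_space[OF ab _ PG(1)] by blast
  show ?thesis
    unfolding expected_regret_def using True regret_le[OF F]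
    by (intro integral_le_const) (auto simp: sample_space_sets)
next
  case False
  \<comment> \<open>The Bochner integral of a non-integrable function is 0.\<close>
  then show ?thesis using V_mono[of 0 1] by (simp add: expected_regret_def not_integrable_integral_eq)
qed

lemma bdd_above_expected_regrets:
  "bdd_above {ER F | F. \<forall>i\<in>{1..K}. F i \<in> cdf_path H1 H2 ` {0..1}}"
  using expected_regret_le unfolding bdd_above_def by blast

definition optimal_value :: "nat \<Rightarrow> real \<Rightarrow> real" where
  "optimal_value j e = (SUP \<delta>\<in>M. V (1/2 + e * \<delta> j))"

context
  fixes j :: nat
  assumes j: "j \<in> {1..K}"
begin

lemma perturbed_weight_bounds:
  assumes "\<delta> \<in> M" "\<bar>e\<bar> \<le> 1/2"
  shows "0 \<le> 1/2 + e * \<delta> j" "1/2 + e * \<delta> j \<le> 1"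
proof -
  have "0 \<le> \<delta> j" "\<delta> j \<le> 1" using simplexK_coordinate[of \<delta> K j] assms(1) M(1) j by auto
  then have "\<bar>e * \<delta> j\<bar> \<le> 1/2 * 1"
    unfolding abs_mult using assms(2) by (intro mult_mono) auto
  then show "0 \<le> 1/2 + e * \<delta> j" "1/2 + e * \<delta> j \<le> 1" by auto
qed

lemma optimal_value_bounds:
  assumes "\<bar>e\<bar> \<le> 1/2"
  shows "\<And>\<delta>. \<delta> \<in> M \<Longrightarrow> V (1/2 + e * \<delta> j) \<le> optimal_value j e" "optimal_value j e \<le> V 1"
proof -
  have le1: "V (1/2 + e * \<delta> j) \<le> V 1" if "\<delta> \<in> M" for \<delta>
    using perturbed_weight_bounds[OF that assms] by (intro V_mono) auto
  show "V (1/2 + e * \<delta> j) \<le> optimal_value j e" if "\<delta> \<in> M" for \<delta>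
    unfolding optimal_value_def using le1 that by (intro cSUP_upper) (auto simp: bdd_above_def)
  show "optimal_value j e \<le> V 1"
    unfolding optimal_value_def using le1 M(2) by (intro cSUP_least) auto
qed

lemma regret_perturbed:
  assumes "\<omega> \<in> space (sample_borel a b K n)"
  shows "regret T K M pol recm (perturbed_cdfs H1 H2 j e) n (fst \<omega>) (snd \<omega>)
       = optimal_value j e - V (1/2 + e * R \<omega> j)"
proof -
  have "T (mix K \<delta> (perturbed_cdfs H1 H2 j e)) = V (1/2 + e * \<delta> j)" if "\<delta> \<in> M" for \<delta>
    using mix_perturbed_cdfs[of \<delta> K j] that M(1) j by (auto simp: V_def)
  then show ?thesis
    using R_in_M[OF assms] by (simp add: regret_def recommendation_def optimal_value_def)
qed

lemma regret_perturbed_ge: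
  assumes \<omega>: "\<omega> \<in> space (sample_borel a b K n)" and \<mu>: "\<mu> \<in> M" and e: "\<bar>e\<bar> \<le> 1/2"
  shows "max 0 (c_minus * (e * (\<mu> j - R \<omega> j))) \<le> regret T K M pol recm (perturbed_cdfs H1 H2 j e) n (fst \<omega>) (snd \<omega>)"
proof -
  have R\<omega>: "R \<omega> \<in> M" by (rule R_in_M[OF \<omega>])
  have "0 \<le> optimal_value j e - V (1/2 + e * R \<omega> j)"
    using optimal_value_bounds(1)[OF e R\<omega>] by simp
  moreover have "c_minus * (e * (\<mu> j - R \<omega> j)) \<le> optimal_value j e - V (1/2 + e * R \<omega> j)"
  proof (cases "e * R \<omega> j \<le> e * \<mu> j")
    case True
    have "c_minus * ((1/2 + e * \<mu> j) - (1/2 + e * R \<omega> j)) \<le> V (1/2 + e * \<mu> j) - V (1/2 + e * R \<omega> j)"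
      using True perturbed_weight_bounds[OF R\<omega> e] perturbed_weight_bounds[OF \<mu> e]
      unfolding V_def by (intro T_incr) auto
    then show ?thesis
      using optimal_value_bounds(1)[OF e \<mu>] by (simp add: algebra_simps)
  next
    case False
    then have "e * (\<mu> j - R \<omega> j) \<le> 0" by (simp add: algebra_simps)
    then have "c_minus * (e * (\<mu> j - R \<omega> j)) \<le> 0"
      using c_minus_pos by (simp add: mult_nonneg_nonpos)
    then show ?thesis using \<open>0 \<le> optimal_value j e - V (1/2 + e * R \<omega> j)\<close> by linarith
  qed
  ultimately show ?thesis
    unfolding regret_perturbed[OF \<omega>] by simp
qed

lemma borel_measurable_R_coordinate: "(\<lambda>\<omega>. R \<omega> j) \<in> borel_measurable (sample_borel a b K n)"
proof -
  have "(\<lambda>x. x j) \<in> borel_measurable (restrict_space (PiM {1..K} (\<lambda>_. borel)) M)"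
    using j by (intro measurable_restrict_space1) simp
  from measurable_comp[OF measurable_recommendation[OF policy n] this] show ?thesis
    by (simp add: comp_def)
qed

lemma prob_space_perturbed:
  assumes e: "\<bar>e\<bar> \<le> 1/2"
  shows "prob_space (sample_space a b K n (perturbed_cdfs H1 H2 j e) PG)"
proof -
  have "perturbed_cdfs H1 H2 j e i \<in> Dcdf a b" for i
    using e unfolding perturbed_cdfs_def by (intro cdf_path_Dcdf[OF H1 H2]) auto
  then show ?thesis using prob_space_sample_space[OF ab _ PG(1)] by blast
qed

lemma integrable_regret_perturbed:
  assumes e: "\<bar>e\<bar> \<le> 1/2"
  shows "integrable (sample_space a b K n (perturbed_cdfs H1 H2 j e) PG)
      (\<lambda>\<omega>. regret T K M pol recm (perturbed_cdfs H1 H2 j e) n (fst \<omega>) (snd \<omega>))"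
proof -
  let ?regret = "\<lambda>\<omega>. regret T K M pol recm (perturbed_cdfs H1 H2 j e) n (fst \<omega>) (snd \<omega>)"
  interpret prob_space "sample_space a b K n (perturbed_cdfs H1 H2 j e) PG"
    by (rule prob_space_perturbed[OF e])
  \<comment> \<open>V is monotone only on [0, 1]; clamping its argument makes it monotone, hence Borel, on all of \<real>.\<close>
  define V01 where "V01 x = V (max 0 (min 1 x))" for x
  have "mono V01" unfolding mono_def V01_def by (intro allI impI V_mono) auto
  then have "V01 \<in> borel_measurable borel" by (rule borel_measurable_mono)
  then have "(\<lambda>\<omega>. optimal_value j e - V01 (1/2 + e * R \<omega> j)) \<in> borel_measurable (sample_borel a b K n)"
    using borel_measurable_R_coordinate by measurable
  moreover have "optimal_value j e - V01 (1/2 + e * R \<omega> j) = ?regret \<omega>"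
    if "\<omega> \<in> space (sample_borel a b K n)" for \<omega>
    using perturbed_weight_bounds[OF R_in_M[OF that] e] regret_perturbed[OF that] by (simp add: V01_def)
  ultimately have "?regret \<in> borel_measurable (sample_borel a b K n)"
    by (rule measurable_cong[THEN iffD1, rotated])
  moreover have "\<bar>?regret \<omega>\<bar> \<le> V 1 - V 0" if "\<omega> \<in> space (sample_borel a b K n)" for \<omega>
  proof -
    have "V 0 \<le> V (1/2 + e * R \<omega> j)"
      using perturbed_weight_bounds[OF R_in_M[OF that] e] by (intro V_mono) auto
    moreover have "V (1/2 + e * R \<omega> j) \<le> optimal_value j e" "optimal_value j e \<le> V 1"
      using optimal_value_bounds[OF e] R_in_M[OF that] by auto
    ultimately show ?thesis
      unfolding regret_perturbed[OF that] by linarith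
  qed
  ultimately show ?thesis
    by (intro integrable_bounded) (simp_all add: measurable_cong_sets[OF sample_space_sets(1) refl]
        sample_space_sets(2))
qed


lemma expected_regrets_perturbed_ge:
  assumes \<nu>: "\<nu> \<in> M" and \<gamma>: "\<gamma> \<in> M" and order: "\<gamma> j \<le> \<nu> j"
    and \<epsilon>: "96 * real n * \<epsilon>\<^sup>2 = 1" "0 < \<epsilon>"
  shows "c_minus * \<epsilon> * (\<nu> j - \<gamma> j) / 2
       \<le> ER (perturbed_cdfs H1 H2 j \<epsilon>) + ER (perturbed_cdfs H1 H2 j (-\<epsilon>))"
proof -
  define B where "B = c_minus * \<epsilon> * (\<nu> j - \<gamma> j)"
  define \<phi>P where "\<phi>P \<omega> = min B (max 0 (c_minus * (\<epsilon> * (\<nu> j - R \<omega> j))))" for \<omega>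
  define \<phi>Q where "\<phi>Q \<omega> = min B (max 0 (c_minus * (-\<epsilon> * (\<gamma> j - R \<omega> j))))" for \<omega>
  have \<epsilon>_half: "\<bar>\<epsilon>\<bar> \<le> 1/2" "\<bar>-\<epsilon>\<bar> \<le> 1/2" using perturbation_le_half[OF \<epsilon>(1)] by simp_all
  have "0 \<le> B" using c_minus_pos \<epsilon>(2) order by (simp add: B_def)
  have \<phi>_meas: "\<phi>P \<in> borel_measurable (sample_borel a b K n)" "\<phi>Q \<in> borel_measurable (sample_borel a b K n)"
    unfolding \<phi>P_def \<phi>Q_def using borel_measurable_R_coordinate by measurable
  have \<phi>_bound: "\<bar>\<phi>P \<omega>\<bar> \<le> B" "\<bar>\<phi>Q \<omega>\<bar> \<le> B" for \<omega>
    using \<open>0 \<le> B\<close> by (auto simp: \<phi>P_def \<phi>Q_def)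
  have cover: "B \<le> \<phi>P \<omega> + \<phi>Q \<omega>" for \<omega>
  proof -
    have "c_minus * (\<epsilon> * (\<nu> j - R \<omega> j)) + c_minus * (-\<epsilon> * (\<gamma> j - R \<omega> j)) = B"
      by (simp add: B_def algebra_simps)
    then show ?thesis
      using \<open>0 \<le> B\<close> unfolding \<phi>P_def \<phi>Q_def min_def max_def by (auto split: if_splits)
  qed
  have regret_ge: "\<phi>P \<omega> \<le> regret T K M pol recm (perturbed_cdfs H1 H2 j \<epsilon>) n (fst \<omega>) (snd \<omega>)"
    "\<phi>Q \<omega> \<le> regret T K M pol recm (perturbed_cdfs H1 H2 j (-\<epsilon>)) n (fst \<omega>) (snd \<omega>)"
    if "\<omega> \<in> space (sample_borel a b K n)" for \<omega>
    unfolding \<phi>P_def \<phi>Q_def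
    by (rule order_trans[OF min.cobounded2 regret_perturbed_ge[OF that \<nu> \<epsilon>_half(1)]],
        rule order_trans[OF min.cobounded2 regret_perturbed_ge[OF that \<gamma> \<epsilon>_half(2)]])
  have "B / 2 \<le> ER (perturbed_cdfs H1 H2 j \<epsilon>) + ER (perturbed_cdfs H1 H2 j (-\<epsilon>))"
    unfolding expected_regret_def
  proof (rule two_point_lower_bound[OF prob_space_perturbed[OF \<epsilon>_half(1)] prob_space_perturbed[OF \<epsilon>_half(2)]])
    show "\<bar>(\<integral>\<omega>. \<phi>Q \<omega> \<partial>sample_space a b K n (perturbed_cdfs H1 H2 j \<epsilon>) PG)
        - (\<integral>\<omega>. \<phi>Q \<omega> \<partial>sample_space a b K n (perturbed_cdfs H1 H2 j (-\<epsilon>)) PG)\<bar> \<le> B / 2"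
      by (rule abs_integral_sample_space_perturbed_diff_le[OF ab H1 H2 PG j \<epsilon>(1) \<phi>_meas(2) \<phi>_bound(2)])
  qed (use \<phi>_meas \<phi>_bound cover regret_ge integrable_regret_perturbed \<epsilon>_half in
      \<open>simp_all add: measurable_cong_sets[OF sample_space_sets(1) refl] sample_space_sets\<close>)
  then show ?thesis by (simp add: B_def)
qed

lemma expected_regrets_Sup_ge_coordinate:
  assumes \<nu>: "\<nu> \<in> M" and \<gamma>: "\<gamma> \<in> M"
  shows "c_minus / (4 * sqrt (96 * real n)) * \<bar>\<nu> j - \<gamma> j\<bar>
       \<le> Sup {ER F | F. \<forall>i\<in>{1..K}. F i \<in> cdf_path H1 H2 ` {0..1}}" (is "_ \<le> ?S")
proof -
  define \<epsilon> where "\<epsilon> = 1 / sqrt (96 * real n)"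
  have \<epsilon>: "96 * real n * \<epsilon>\<^sup>2 = 1" "0 < \<epsilon>"
    using n K by (simp_all add: \<epsilon>_def power_divide)
  have le_Sup: "ER (perturbed_cdfs H1 H2 j e) \<le> ?S" if "\<bar>e\<bar> \<le> 1/2" for e
  proof (rule cSup_upper[OF _ bdd_above_expected_regrets],
      intro CollectI exI[of _ "perturbed_cdfs H1 H2 j e"] conjI refl ballI)
    fix i
    show "perturbed_cdfs H1 H2 j e i \<in> cdf_path H1 H2 ` {0..1}"
      using that by (auto simp: perturbed_cdfs_def abs_le_iff intro!: imageI)
  qed
  have "c_minus * \<epsilon> * \<bar>\<nu> j - \<gamma> j\<bar> / 2
      \<le> ER (perturbed_cdfs H1 H2 j \<epsilon>) + ER (perturbed_cdfs H1 H2 j (-\<epsilon>))"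
    using expected_regrets_perturbed_ge[OF \<nu> \<gamma> _ \<epsilon>] expected_regrets_perturbed_ge[OF \<gamma> \<nu> _ \<epsilon>]
    by (cases "\<gamma> j \<le> \<nu> j") (auto simp: abs_minus_commute)
  moreover have "ER (perturbed_cdfs H1 H2 j \<epsilon>) \<le> ?S" "ER (perturbed_cdfs H1 H2 j (-\<epsilon>)) \<le> ?S"
    using le_Sup perturbation_le_half[OF \<epsilon>(1)] by simp_all
  moreover have "c_minus / (4 * sqrt (96 * real n)) * \<bar>\<nu> j - \<gamma> j\<bar> = c_minus * \<epsilon> * \<bar>\<nu> j - \<gamma> j\<bar> / 4"
    by (simp add: \<epsilon>_def)
  ultimately show ?thesis by linarith
qed

end

lemma expected_regrets_Sup_ge_diamK:
  "c_minus / (8 * sqrt 96) * (diamK K M)\<^sup>2 / sqrt (real n)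
     \<le> Sup {ER F | F. \<forall>i\<in>{1..K}. F i \<in> cdf_path H1 H2 ` {0..1}}"
proof -
  let ?S = "Sup {ER F | F. \<forall>i\<in>{1..K}. F i \<in> cdf_path H1 H2 ` {0..1}}"
  have sqrt_n: "0 < sqrt (real n)" using n K by simp
  have "(L2_set (\<lambda>i. \<nu> i - \<gamma> i) {1..K})\<^sup>2 \<le> 8 * sqrt 96 * sqrt (real n) / c_minus * ?S"
    if "\<nu> \<in> M" "\<gamma> \<in> M" for \<nu> \<gamma>
  proof -
    have "\<nu> \<in> simplexK K" "\<gamma> \<in> simplexK K" using that M(1) by auto
    then obtain j where j: "j \<in> {1..K}" "(L2_set (\<lambda>i. \<nu> i - \<gamma> i) {1..K})\<^sup>2 \<le> 2 * \<bar>\<nu> j - \<gamma> j\<bar>"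
      using simplexK_L2_set_diff_sq_le[OF _ _ K] by blast
    have "c_minus / (4 * sqrt 96 * sqrt (real n)) * \<bar>\<nu> j - \<gamma> j\<bar> \<le> ?S"
      using expected_regrets_Sup_ge_coordinate[OF j(1) that] by (simp add: real_sqrt_mult)
    then have "\<bar>\<nu> j - \<gamma> j\<bar> \<le> 4 * sqrt 96 * sqrt (real n) / c_minus * ?S"
      using c_minus_pos sqrt_n by (simp add: field_simps)
    then show ?thesis using j(2) by simp
  qed
  then have "(diamK K M)\<^sup>2 \<le> 8 * sqrt 96 * sqrt (real n) / c_minus * ?S"
    by (rule diamK_sq_le[OF M(2)])
  then show ?thesis
    using c_minus_pos sqrt_n by (simp add: field_simps)
qed

end

theorem theorem3p1:
  fixes a b C c_minus :: real
    and D :: "(real \<Rightarrow> real) set"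
    and T :: "(real \<Rightarrow> real) \<Rightarrow> real"
    and H1 H2 :: "real \<Rightarrow> real"
  defines "J \<equiv> (\<lambda>\<tau>::real. (\<lambda>x. \<tau> * H1 x + (1 - \<tau>) * H2 x))"
  assumes ab: "a < b"
    and D_sub: "D \<subseteq> Dcdf a b" and D_ne: "D \<noteq> {}" and D_conv: "convex_fset D"
    and C_pos: "C > 0"
    and T_lip: "\<forall>F\<in>D. \<forall>G\<in>Dcdf a b. \<bar>T F - T G\<bar> \<le> C * supdist F G"
    and H_in: "H1 \<in> D" "H2 \<in> D"
    and J_in: "\<forall>\<tau>\<in>{0..1}. J \<tau> \<in> D"
    and cm_pos: "c_minus > 0"
    and T_incr: "\<forall>\<tau>1 \<tau>2. 0 \<le> \<tau>1 \<and> \<tau>1 \<le> \<tau>2 \<and> \<tau>2 \<le> 1 \<longrightarrow>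
                   T (J \<tau>2) - T (J \<tau>1) \<ge> c_minus * (\<tau>2 - \<tau>1)"
  shows "\<exists>c>0. \<forall>K::nat. \<forall>M. K \<ge> 2 \<and> closed M \<and> M \<subseteq> simplexK K
           \<and> (\<exists>\<nu>\<in>M. \<exists>\<gamma>\<in>M. \<nu> \<noteq> \<gamma>) \<longrightarrow>
         (\<forall>pol recm. is_policy K a b M pol recm \<longrightarrow>
          (\<forall>PG::real measure. prob_space PG \<and> sets PG = sets borel \<longrightarrow>
           (\<forall>n\<ge>K.
             Sup {expected_regret a b T K M pol recm F PG n | F.
                    \<forall>i\<in>{1..K}. F i \<in> J ` {0..1}}
               \<ge> c * (diamK K M)\<^sup>2 / sqrt (real n))))"
proof -
  have J_eq: "J = cdf_path H1 H2" by (simp add: J_def cdf_path_def fun_eq_iff)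
  have H_Dcdf: "H1 \<in> Dcdf a b" "H2 \<in> Dcdf a b" using H_in D_sub by auto
  have T_mono: "c_minus * (\<tau>2 - \<tau>1) \<le> T (cdf_path H1 H2 \<tau>2) - T (cdf_path H1 H2 \<tau>1)"
    if "0 \<le> \<tau>1" "\<tau>1 \<le> \<tau>2" "\<tau>2 \<le> 1" for \<tau>1 \<tau>2
    using T_incr that unfolding J_eq by blast
  show ?thesis
  proof (intro exI[of _ "c_minus / (8 * sqrt 96)"] conjI allI impI)
    show "0 < c_minus / (8 * sqrt 96)" using cm_pos by simp
    fix K :: nat and M pol recm and PG :: "real measure" and n
    assume M: "2 \<le> K \<and> closed M \<and> M \<subseteq> simplexK K \<and> (\<exists>\<nu>\<in>M. \<exists>\<gamma>\<in>M. \<nu> \<noteq> \<gamma>)"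
      and policy: "is_policy K a b M pol recm" and PG: "prob_space PG \<and> sets PG = sets borel"
      and n: "K \<le> n"
    have M': "M \<subseteq> simplexK K" "M \<noteq> {}" "0 < K" using M by auto
    interpret regret_lower_bound a b c_minus H1 H2 T K n M pol recm PG
      by (rule regret_lower_bound.intro)
         (simp_all add: less_imp_le[OF ab] H_Dcdf cm_pos T_mono M' policy PG n)
    show "c_minus / (8 * sqrt 96) * (diamK K M)\<^sup>2 / sqrt (real n)
        \<le> Sup {expected_regret a b T K M pol recm F PG n | F. \<forall>i\<in>{1..K}. F i \<in> J ` {0..1}}"
      unfolding J_eq by (rule expected_regrets_Sup_ge_diamK)
  qed
qed

end
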